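(* Let $\Gamma$ be a graph of connectivity $1$. Then $\Gamma$ is arc-transitive if and only if: (1) every lobe of $\Gamma$ is arc-transitive; (2) the lobes of $\Gamma$ are pairwise isomorphic; and (3) all vertices of $\Gamma$ lie in the same number of lobes.
   Context: All graphs are simple, connected, and finite or countably infinite. For edges $e_1,e_2$ write $e_1\cong e_2$ if $e_1=e_2$ or they lie on a common cycle; a lobe is the subgraph induced by an equivalence class (a cut-edge with its ends, or a maximal biconnected subgraph). A connected graph other than $K_2$ has connectivity $1$ iff some vertex lies in at least two lobes. An arc is an ordered pair of adjacent vertices; arc-transitive means the automorphism group acts transitively on arcs. *)

theory Defs
  imports Main "HOL-Library.Countable_Set" "HOL-Library.Equipollence"
begin

definition simple_graph :: "'a set \<Rightarrow> ('a \<Rightarrow> 'a \<Rightarrow> bool) \<Rightarrow> bool" where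
  "simple_graph V E \<longleftrightarrow> (\<forall>x y. E x y \<longrightarrow> x \<in> V \<and> y \<in> V \<and> x \<noteq> y \<and> E y x)"

definition connected_graph :: "'a set \<Rightarrow> ('a \<Rightarrow> 'a \<Rightarrow> bool) \<Rightarrow> bool" where
  "connected_graph V E \<longleftrightarrow> V \<noteq> {} \<and>
     (\<forall>u\<in>V. \<forall>w\<in>V. (\<lambda>x y. x \<in> V \<and> y \<in> V \<and> E x y)\<^sup>*\<^sup>* u w)"

definition connectivity_one :: "'a set \<Rightarrow> ('a \<Rightarrow> 'a \<Rightarrow> bool) \<Rightarrow> bool" where
  "connectivity_one V E \<longleftrightarrow> connected_graph V E \<and> (\<exists>u\<in>V. \<exists>w\<in>V. u \<noteq> w) \<and>
     (\<exists>v\<in>V. \<not> connected_graph (V - {v}) E \<or> (\<exists>w. V - {v} = {w}))"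

definition edges :: "('a \<Rightarrow> 'a \<Rightarrow> bool) \<Rightarrow> 'a set set" where
  "edges E = {{x, y} | x y. E x y}"

definition is_cycle :: "'a set \<Rightarrow> ('a \<Rightarrow> 'a \<Rightarrow> bool) \<Rightarrow> 'a list \<Rightarrow> bool" where
  "is_cycle V E xs \<longleftrightarrow> length xs \<ge> 3 \<and> distinct xs \<and> set xs \<subseteq> V \<and>
     (\<forall>i < length xs. E (xs ! i) (xs ! ((i + 1) mod length xs)))"

definition cycle_edges :: "'a list \<Rightarrow> 'a set set" where
  "cycle_edges xs = {{xs ! i, xs ! ((i + 1) mod length xs)} | i. i < length xs}"

definition edge_equiv :: "'a set \<Rightarrow> ('a \<Rightarrow> 'a \<Rightarrow> bool) \<Rightarrow> 'a set \<Rightarrow> 'a set \<Rightarrow> bool" where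
  "edge_equiv V E e1 e2 \<longleftrightarrow> e1 = e2 \<or>
     (\<exists>c. is_cycle V E c \<and> e1 \<in> cycle_edges c \<and> e2 \<in> cycle_edges c)"

definition lobes :: "'a set \<Rightarrow> ('a \<Rightarrow> 'a \<Rightarrow> bool) \<Rightarrow> 'a set set set" where
  "lobes V E = {{e' \<in> edges E. edge_equiv V E e e'} | e. e \<in> edges E}"

definition lobe_verts :: "'a set set \<Rightarrow> 'a set" where
  "lobe_verts L = \<Union>L"

definition lobe_adj :: "'a set set \<Rightarrow> 'a \<Rightarrow> 'a \<Rightarrow> bool" where
  "lobe_adj L x y \<longleftrightarrow> x \<noteq> y \<and> {x, y} \<in> L"

definition is_automorphism :: "'a set \<Rightarrow> ('a \<Rightarrow> 'a \<Rightarrow> bool) \<Rightarrow> ('a \<Rightarrow> 'a) \<Rightarrow> bool" where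
  "is_automorphism V E f \<longleftrightarrow> bij_betw f V V \<and>
     (\<forall>x\<in>V. \<forall>y\<in>V. E x y \<longleftrightarrow> E (f x) (f y))"

definition arc_transitive :: "'a set \<Rightarrow> ('a \<Rightarrow> 'a \<Rightarrow> bool) \<Rightarrow> bool" where
  "arc_transitive V E \<longleftrightarrow> (\<forall>u v x y. u \<in> V \<and> v \<in> V \<and> E u v \<and> x \<in> V \<and> y \<in> V \<and> E x y \<longrightarrow>
     (\<exists>f. is_automorphism V E f \<and> f u = x \<and> f v = y))"

definition graph_iso :: "'a set \<Rightarrow> ('a \<Rightarrow> 'a \<Rightarrow> bool) \<Rightarrow> 'b set \<Rightarrow> ('b \<Rightarrow> 'b \<Rightarrow> bool) \<Rightarrow> bool" where
  "graph_iso V1 E1 V2 E2 \<longleftrightarrow> (\<exists>f. bij_betw f V1 V2 \<and>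
     (\<forall>x\<in>V1. \<forall>y\<in>V1. E1 x y \<longleftrightarrow> E2 (f x) (f y)))"

end

theory Submission
  imports Defs
begin

text \<open>Automorphisms map cycles to cycles, hence permute the lobes; this gives the forward direction.
  Conversely, an isomorphism between two lobes matching two given arcs is extended by Zorn's lemma
  within the admissible partial isomorphisms: isomorphisms between connected unions of lobes that,
  at each matched vertex, have matched either all or exactly one of its lobes. Because lobes are
  arranged like a tree, the unmatched lobes at a matched vertex can always be attached, pairing
  them by the equal lobe counts and matching each pair by arc-transitivity; so a maximal one is
  saturated everywhere and, the graph being connected, is an automorphism.\<close>

section \<open>Walks and cycles as lists\<close>

fun walk_edges :: "'a list \<Rightarrow> 'a set set" where
  "walk_edges [] = {}"
| "walk_edges [x] = {}"
| "walk_edges (x # y # xs) = insert {x, y} (walk_edges (y # xs))"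

lemma successively_append_shared:
  "successively R (xs @ y # ys) \<longleftrightarrow> successively R (xs @ [y]) \<and> successively R (y # ys)"
  by (auto simp: successively_append_iff)

lemma successively_middle: "successively R (xs @ a # b # ys) \<Longrightarrow> R a b"
  by (simp add: successively_append_iff)

lemma walk_edges_append_shared:
  "walk_edges (xs @ y # ys) = walk_edges (xs @ [y]) \<union> walk_edges (y # ys)"
proof (induction xs)
  case (Cons x xs)
  then show ?case by (cases xs) auto
qed simp

lemma walk_edges_join: "xs \<noteq> [] \<Longrightarrow> {last xs, y} \<in> walk_edges (xs @ y # ys)"
proof (induction xs)
  case (Cons x xs)
  then show ?case by (cases xs) auto
qed simp

lemma walk_edges_rev: "walk_edges (rev xs) = walk_edges xs"
proof (induction xs rule: walk_edges.induct)
  case (3 x y xs)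
  have "walk_edges (rev (x # y # xs)) = walk_edges (rev xs @ [y]) \<union> {{y, x}}"
    using walk_edges_append_shared[of "rev xs" y "[x]"] by simp
  then show ?case using 3 by (auto simp: insert_commute)
qed auto

lemma walk_edges_conv_nth: "walk_edges xs = {{xs ! i, xs ! Suc i} | i. Suc i < length xs}"
proof (induction xs rule: walk_edges.induct)
  case (3 x y xs)
  have "{{(x # y # xs) ! i, (x # y # xs) ! Suc i} | i. Suc i < length (x # y # xs)}
      = insert {x, y} {{(y # xs) ! i, (y # xs) ! Suc i} | i. Suc i < length (y # xs)}"
    (is "?l = ?r")
  proof
    show "?l \<subseteq> ?r"
    proof
      fix e assume "e \<in> ?l"
      then obtain i where "e = {(x # y # xs) ! i, (x # y # xs) ! Suc i}" "Suc i < length (x # y # xs)"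
        by blast
      then show "e \<in> ?r" by (cases i) auto
    qed
    show "?r \<subseteq> ?l"
    proof
      fix e assume "e \<in> ?r"
      then consider "e = {x, y}" | i where "e = {(y # xs) ! i, (y # xs) ! Suc i}" "Suc i < length (y # xs)"
        by blast
      then show "e \<in> ?l"
      proof cases
        case 1 then show ?thesis by (intro CollectI exI[of _ 0]) simp
      next
        case 2 then show ?thesis by (intro CollectI exI[of _ "Suc i"]) simp
      qed
    qed
  qed
  then show ?case using 3 by simp
qed auto

lemma walk_edges_obtain:
  assumes "e \<in> walk_edges xs"
  obtains U a b W where "xs = U @ a # b # W" "e = {a, b}"
  using assms
proof (induction xs arbitrary: thesis rule: walk_edges.induct)
  case (3 x y xs)
  then show ?case by simp (metis append_Cons append_Nil)
qed auto

lemma walk_edges_set: "e \<in> walk_edges xs \<Longrightarrow> \<exists>a b. e = {a, b} \<and> a \<in> set xs \<and> b \<in> set xs"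
  by (erule walk_edges_obtain) auto

lemma rtranclp_imp_distinct_walk:
  assumes "R\<^sup>*\<^sup>* a b"
  shows "\<exists>xs. successively R xs \<and> distinct xs \<and> xs \<noteq> [] \<and> hd xs = a \<and> last xs = b"
  using assms
proof (induction rule: rtranclp_induct)
  case base
  show ?case by (intro exI[of _ "[a]"]) simp
next
  case (step y z)
  then obtain xs where xs: "successively R xs" "distinct xs" "xs \<noteq> []" "hd xs = a" "last xs = y"
    by blast
  show ?case
  proof (cases "z \<in> set xs")
    case True
    then obtain ys zs where "xs = ys @ z # zs" by (meson split_list)
    then show ?thesis using xs
      by (intro exI[of _ "ys @ [z]"]) (auto simp: hd_append successively_append_iff split: if_splits)
  next
    case False
    then show ?thesis using xs step.hyps(2)
      by (intro exI[of _ "xs @ [z]"]) (auto simp: hd_append successively_append_iff)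
  qed
qed

lemma successively_imp_rtranclp: "successively R xs \<Longrightarrow> xs \<noteq> [] \<Longrightarrow> R\<^sup>*\<^sup>* (hd xs) (last xs)"
proof (induction xs)
  case (Cons x xs)
  then show ?case
    by (cases xs) (auto intro: converse_rtranclp_into_rtranclp)
qed simp

lemma cycle_nth_closed:
  assumes "c \<noteq> []" "i < length c"
  shows "(c @ [hd c]) ! i = c ! i" "(c @ [hd c]) ! Suc i = c ! ((i + 1) mod length c)"
proof -
  show "(c @ [hd c]) ! i = c ! i" using assms by (simp add: nth_append)
  show "(c @ [hd c]) ! Suc i = c ! ((i + 1) mod length c)"
  proof (cases "Suc i < length c")
    case False
    then have "Suc i = length c" using assms by simp
    then show ?thesis using assms by (simp add: nth_append hd_conv_nth)
  qed (simp add: nth_append)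
qed

lemma is_cycle_iff_closed_walk:
  assumes "c \<noteq> []"
  shows "is_cycle V E c \<longleftrightarrow> length c \<ge> 3 \<and> distinct c \<and> set c \<subseteq> V \<and> successively E (c @ [hd c])"
proof -
  have "successively E (c @ [hd c]) \<longleftrightarrow> (\<forall>i < length c. E (c ! i) (c ! ((i + 1) mod length c)))"
    unfolding successively_conv_nth using cycle_nth_closed[OF assms] by auto
  then show ?thesis unfolding is_cycle_def by blast
qed

lemma cycle_edges_eq_walk_edges:
  assumes "c \<noteq> []"
  shows "cycle_edges c = walk_edges (c @ [hd c])"
proof -
  have edge: "{(c @ [hd c]) ! i, (c @ [hd c]) ! Suc i} = {c ! i, c ! ((i + 1) mod length c)}"
    if "i < length c" for i
    using cycle_nth_closed[OF assms that] by simp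
  show ?thesis unfolding walk_edges_conv_nth cycle_edges_def
  proof (intro set_eqI iffI)
    fix e assume "e \<in> {{c ! i, c ! ((i + 1) mod length c)} |i. i < length c}"
    then obtain i where "e = {c ! i, c ! ((i + 1) mod length c)}" "i < length c" by blast
    then show "e \<in> {{(c @ [hd c]) ! i, (c @ [hd c]) ! Suc i} |i. Suc i < length (c @ [hd c])}"
      using edge[of i] by (intro CollectI exI[of _ i]) simp
  next
    fix e assume "e \<in> {{(c @ [hd c]) ! i, (c @ [hd c]) ! Suc i} |i. Suc i < length (c @ [hd c])}"
    then obtain i where "e = {(c @ [hd c]) ! i, (c @ [hd c]) ! Suc i}" "Suc i < length (c @ [hd c])"
      by blast
    then show "e \<in> {{c ! i, c ! ((i + 1) mod length c)} |i. i < length c}"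
      using edge[of i] by (intro CollectI exI[of _ i]) simp
  qed
qed

lemma is_cycle_rotate1:
  assumes "is_cycle V E (x # xs)"
  shows "is_cycle V E (xs @ [x]) \<and> cycle_edges (xs @ [x]) = cycle_edges (x # xs)"
proof (cases xs)
  case (Cons y ys)
  have c: "length (x # xs) \<ge> 3" "distinct (x # xs)" "set (x # xs) \<subseteq> V"
    "successively E (x # y # ys @ [x])"
    using is_cycle_iff_closed_walk[of "x # xs" V E] assms Cons by auto
  then have "successively E ((y # ys) @ x # [y])"
    by (subst successively_append_shared) simp
  then have "is_cycle V E (y # ys @ [x])"
    using c Cons by (subst is_cycle_iff_closed_walk) auto
  moreover have "walk_edges ((y # ys) @ x # [y]) = walk_edges (x # y # ys @ [x])"
    by (subst walk_edges_append_shared) (auto simp: insert_commute)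
  then have "walk_edges ((y # ys @ [x]) @ [hd (y # ys @ [x])]) = walk_edges ((x # xs) @ [hd (x # xs)])"
    using Cons by simp
  then have "cycle_edges (y # ys @ [x]) = cycle_edges (x # xs)"
    by (simp add: cycle_edges_eq_walk_edges del: append.simps append_Cons)
  ultimately show ?thesis using Cons by simp
qed (use assms in simp)

lemma is_cycle_swap:
  assumes "is_cycle V E (A @ B)"
  shows "is_cycle V E (B @ A) \<and> cycle_edges (B @ A) = cycle_edges (A @ B)"
  using assms
proof (induction A arbitrary: B)
  case (Cons a A)
  then have "is_cycle V E ((B @ [a]) @ A) \<and> cycle_edges ((B @ [a]) @ A) = cycle_edges (a # A @ B)"
    using is_cycle_rotate1[of V E a "A @ B"] Cons.IH[of "B @ [a]"] by simp
  then show ?case by simp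
qed simp

lemma is_cycle_successively:
  assumes "is_cycle V E c"
  shows "successively E c"
proof -
  have "c \<noteq> []" using assms by (auto simp: is_cycle_def)
  then have "successively E (c @ [hd c])" using assms by (simp add: is_cycle_iff_closed_walk)
  then show ?thesis by (simp add: successively_append_iff)
qed

lemma cycle_edges_set:
  assumes c: "is_cycle V E c" and e: "e \<in> cycle_edges c"
  shows "\<exists>a b. e = {a, b} \<and> a \<in> set c \<and> b \<in> set c \<and> E a b"
proof -
  have ne: "c \<noteq> []" using c by (auto simp: is_cycle_def)
  obtain U a b W where u: "c @ [hd c] = U @ a # b # W" "e = {a, b}"
    using e ne walk_edges_obtain by (metis cycle_edges_eq_walk_edges)
  have "a \<in> set (c @ [hd c])" "b \<in> set (c @ [hd c])" unfolding u(1) by simp_all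
  moreover have "set (c @ [hd c]) = set c" using ne by auto
  moreover have "E a b"
    using c ne u successively_middle by (metis is_cycle_iff_closed_walk)
  ultimately show ?thesis using u by auto
qed

lemma is_cycle_closed_walkI:
  assumes "Q \<noteq> []" "successively E (Q @ I @ [hd Q])" "distinct (Q @ I)" "length (Q @ I) \<ge> 3"
    "set (Q @ I) \<subseteq> V"
  shows "is_cycle V E (Q @ I) \<and> cycle_edges (Q @ I) = walk_edges (Q @ I @ [hd Q])"
  using assms by (simp add: is_cycle_iff_closed_walk cycle_edges_eq_walk_edges)

lemma walk_edges_map: "walk_edges (map f xs) = (\<lambda>e. f ` e) ` walk_edges xs"
  by (induction xs rule: walk_edges.induct) auto

section \<open>Edge equivalence\<close>

locale sgraph =
  fixes V :: "'a set" and E :: "'a \<Rightarrow> 'a \<Rightarrow> bool"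
  assumes simple: "simple_graph V E"
begin

lemma E_sym: "E a b \<Longrightarrow> E b a" and E_V: "E a b \<Longrightarrow> a \<in> V" "E a b \<Longrightarrow> b \<in> V"
  and E_irrefl: "E a b \<Longrightarrow> a \<noteq> b"
  using simple unfolding simple_graph_def by blast+

lemma successively_rev_E: "successively E (rev xs) \<longleftrightarrow> successively E xs"
proof -
  have "successively (\<lambda>x y. E y x) xs \<longleftrightarrow> successively E xs"
    using E_sym by (blast intro: successively_mono)
  then show ?thesis by simp
qed

lemma is_cycle_add_ear:
  assumes c: "is_cycle V E (p # X @ q # Y)" and ear: "successively E (q # I @ [p])"
    and I: "distinct I" "set I \<inter> set (p # X @ q # Y) = {}" "set I \<subseteq> V"
    and long: "I = [] \<Longrightarrow> X \<noteq> []"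
  shows "is_cycle V E (p # X @ q # I)
    \<and> cycle_edges (p # X @ q # I) = walk_edges (p # X @ [q]) \<union> walk_edges (q # I @ [p])"
proof -
  let ?n = "p # X @ q # I"
  have "successively E (p # X @ q # Y @ [p])"
    using c by (simp add: is_cycle_iff_closed_walk)
  then have "successively E ((p # X) @ [q])"
    using successively_append_shared[of E "p # X" q "Y @ [p]"] by simp
  then have "successively E ((p # X) @ q # (I @ [p]))"
    using ear by (subst successively_append_shared) simp
  then have "successively E (?n @ [hd ?n])" by simp
  moreover have "distinct ?n" "set ?n \<subseteq> V"
    using c I by (auto simp: is_cycle_def)
  moreover have "length ?n \<ge> 3"
    using long by (cases I; cases X) auto
  ultimately have "is_cycle V E ?n \<and> cycle_edges ?n = walk_edges (?n @ [hd ?n])"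
    using is_cycle_closed_walkI[of ?n E "[]" V] by simp
  moreover have "walk_edges (?n @ [hd ?n]) = walk_edges (p # X @ [q]) \<union> walk_edges (q # I @ [p])"
    using walk_edges_append_shared[of "p # X" q "I @ [p]"] by simp
  ultimately show ?thesis by simp
qed

lemma is_cycle_split_at:
  assumes c: "is_cycle V E c" and pq: "p \<in> set c" "q \<in> set c" "p \<noteq> q"
  obtains X Y where "is_cycle V E (p # X @ q # Y)" "set (p # X @ q # Y) = set c"
    "cycle_edges c = walk_edges (p # X @ [q]) \<union> walk_edges (q # Y @ [p])"
proof -
  obtain A B where AB: "c = A @ p # B" using pq(1) by (meson split_list)
  have "q \<in> set (B @ A)" using pq AB by auto
  then obtain X Y where XY: "B @ A = X @ q # Y" by (meson split_list)
  have "is_cycle V E (p # B @ A) \<and> cycle_edges (p # B @ A) = cycle_edges c"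
    using is_cycle_swap[of V E A "p # B"] c AB by simp
  then have cyc: "is_cycle V E (p # X @ q # Y)" "cycle_edges (p # X @ q # Y) = cycle_edges c"
    using XY by simp_all
  have "set (B @ A) = set (X @ q # Y)" using XY by simp
  then have "set (p # X @ q # Y) = set c" using AB by auto
  moreover have "cycle_edges c = walk_edges (p # X @ [q]) \<union> walk_edges (q # Y @ [p])"
    using cyc walk_edges_append_shared[of "p # X" q "Y @ [p]"] by (simp add: cycle_edges_eq_walk_edges)
  ultimately show ?thesis using that cyc(1) by blast
qed

lemma cycle_arc:
  assumes c: "is_cycle V E c" and z: "z \<in> set c" and s: "s \<in> set c"
  shows "\<exists>xs. successively E xs \<and> xs \<noteq> [] \<and> hd xs = z \<and> last xs = s \<and> walk_edges xs \<subseteq> cycle_edges c"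
proof (cases "z = s")
  case True
  then show ?thesis by (intro exI[of _ "[z]"]) simp
next
  case False
  obtain X Y where cyc: "is_cycle V E (z # X @ s # Y)" and "set (z # X @ s # Y) = set c"
    and arcs: "cycle_edges c = walk_edges (z # X @ [s]) \<union> walk_edges (s # Y @ [z])"
    by (rule is_cycle_split_at[OF c z s False])
  have "successively E ((z # X) @ s # Y)" using is_cycle_successively[OF cyc] by simp
  then have "successively E ((z # X) @ [s])" using successively_append_shared[of E "z # X" s Y] by simp
  moreover have "walk_edges (z # X @ [s]) \<subseteq> cycle_edges c" using arcs by blast
  ultimately show ?thesis by (intro exI[of _ "z # X @ [s]"]) simp
qed

lemma cycle_through_ear:
  assumes c1: "is_cycle V E c1" and w: "successively E (p # I @ [q])" and d: "distinct (p # I @ [q])"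
    and pc: "p \<in> set c1" and qc: "q \<in> set c1" and Ic: "set I \<inter> set c1 = {}" and IV: "set I \<subseteq> V"
    and chord: "I = [] \<Longrightarrow> {p, q} \<notin> cycle_edges c1" and e: "e \<in> cycle_edges c1"
  shows "\<exists>c. is_cycle V E c \<and> e \<in> cycle_edges c \<and> walk_edges (p # I @ [q]) \<subseteq> cycle_edges c"
proof -
  obtain X Y where cyc: "is_cycle V E (p # X @ q # Y)" and set_eq: "set (p # X @ q # Y) = set c1"
    and arcs: "cycle_edges c1 = walk_edges (p # X @ [q]) \<union> walk_edges (q # Y @ [p])"
    using is_cycle_split_at[OF c1 pc qc] d by auto
  have I: "distinct I" "set I \<inter> set (p # X @ q # Y) = {}" "set I \<subseteq> V"
    using d Ic IV set_eq by auto
  from e arcs consider "e \<in> walk_edges (p # X @ [q])" | "e \<in> walk_edges (q # Y @ [p])" by blast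
  then show ?thesis
  proof cases
    case 1
    have ear: "successively E (q # rev I @ [p])"
      using w successively_rev_E[of "p # I @ [q]"] by simp
    have long: "X \<noteq> []" if "I = []"
    proof
      assume "X = []"
      then have "{p, q} \<in> cycle_edges c1" using arcs by simp
      then show False using chord that by blast
    qed
    have "is_cycle V E (p # X @ q # rev I)
      \<and> cycle_edges (p # X @ q # rev I) = walk_edges (p # X @ [q]) \<union> walk_edges (q # rev I @ [p])"
      by (rule is_cycle_add_ear[OF cyc ear]) (use I long in auto)
    moreover have "walk_edges (q # rev I @ [p]) = walk_edges (p # I @ [q])"
      using walk_edges_rev[of "p # I @ [q]"] by simp
    ultimately show ?thesis using 1 by auto
  next
    case 2
    have cyc': "is_cycle V E (q # Y @ p # X)"
      using is_cycle_swap[of V E "p # X" "q # Y"] cyc by simp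
    have long: "Y \<noteq> []" if "I = []"
    proof
      assume "Y = []"
      then have "{p, q} \<in> cycle_edges c1" using arcs by (simp add: insert_commute)
      then show False using chord that by blast
    qed
    have "is_cycle V E (q # Y @ p # I)
      \<and> cycle_edges (q # Y @ p # I) = walk_edges (q # Y @ [p]) \<union> walk_edges (p # I @ [q])"
      by (rule is_cycle_add_ear[OF cyc' w]) (use I long in auto)
    then show ?thesis using 2 by blast
  qed
qed

lemma cycle_rotate_to_edge:
  assumes c: "is_cycle V E c" and e: "e \<in> cycle_edges c"
  shows "\<exists>a b M. e = {a, b} \<and> is_cycle V E (a # M @ [b]) \<and> cycle_edges (a # M @ [b]) = cycle_edges c"
proof -
  have ne: "c \<noteq> []" and l3: "length c \<ge> 3" using c by (auto simp: is_cycle_def)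
  obtain U x y W where u: "c @ [hd c] = U @ x # y # W" "e = {x, y}"
    using e ne walk_edges_obtain by (metis cycle_edges_eq_walk_edges)
  show ?thesis
  proof (cases W rule: rev_cases)
    case Nil
    then have cU: "c = U @ [x]" "hd c = y" using u(1) by auto
    then obtain U' where "U = y # U'" using l3 by (cases U) auto
    then have "c = y # U' @ [x]" using cU by simp
    moreover have "e = {y, x}" using u(2) by blast
    ultimately show ?thesis using c by blast
  next
    case (snoc W' h)
    have "c @ [hd c] = (U @ x # y # W') @ [h]" by (subst u(1)) (simp add: snoc)
    then have "c = U @ x # y # W'" by simp
    then have "is_cycle V E ((y # W') @ (U @ [x])) \<and> cycle_edges ((y # W') @ (U @ [x])) = cycle_edges c"
      using is_cycle_swap[of V E "U @ [x]" "y # W'"] c by simp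
    moreover have "e = {y, x}" using u(2) by blast
    ultimately show ?thesis by (metis append.assoc append_Cons)
  qed
qed

text \<open>The ear is the arc of the second cycle from its last to its first vertex on \<open>c1\<close>;
  it passes through the closing edge \<open>{s, t}\<close>.\<close>

lemma cycle_through_closing_edge:
  assumes c1: "is_cycle V E c1" "e1 \<in> cycle_edges c1"
    and P: "is_cycle V E (t # M @ [s])" and new: "{s, t} \<notin> cycle_edges c1"
    and ab: "a \<in> set (t # M @ [s])" "b \<in> set (t # M @ [s])" "a \<in> set c1" "b \<in> set c1" "a \<noteq> b"
  shows "\<exists>c. is_cycle V E c \<and> e1 \<in> cycle_edges c \<and> {s, t} \<in> cycle_edges c"
proof -
  let ?P = "t # M @ [s]"
  obtain A1 p B1 where P1: "?P = A1 @ p # B1" "p \<in> set c1" "\<forall>z\<in>set A1. z \<notin> set c1"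
    using split_list_first_prop[of ?P "\<lambda>z. z \<in> set c1"] ab by blast
  have "\<exists>z\<in>set B1. z \<in> set c1"
  proof -
    have "a \<in> set (A1 @ p # B1)" "b \<in> set (A1 @ p # B1)" using ab P1 by simp_all
    then show ?thesis using P1(3) ab by auto
  qed
  then obtain D q C where B1: "B1 = D @ q # C" "q \<in> set c1" "\<forall>z\<in>set C. z \<notin> set c1"
    using split_list_last_prop[of B1 "\<lambda>z. z \<in> set c1"] by blast
  have P2: "?P = (A1 @ p # D) @ (q # C)" using P1 B1 by simp
  let ?c3 = "q # C @ A1 @ p # D"
  have c3: "is_cycle V E ?c3" using is_cycle_swap[of V E "A1 @ p # D" "q # C"] P P2 by simp
  have "successively E ((q # (C @ A1) @ [p]) @ D)" using is_cycle_successively[OF c3] by simp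
  then have w: "successively E (q # (C @ A1) @ [p])" by (simp only: successively_append_iff)
  have d3: "distinct ?c3" and V3: "set ?c3 \<subseteq> V" using c3 by (auto simp: is_cycle_def)
  have d: "distinct (q # (C @ A1) @ [p])" using d3 by auto
  have IX: "set (C @ A1) \<inter> set c1 = {}" using P1(3) B1(3) by auto
  have IV: "set (C @ A1) \<subseteq> V" using V3 by auto
  have lastP: "last ?P = last (q # C)" using P2 by (metis last_appendR list.distinct(1))
  have hdP: "hd ?P = hd (A1 @ [p])" using P1 by (cases A1) auto
  have chord: "{q, p} \<notin> cycle_edges c1" if "C @ A1 = []"
    using lastP hdP that new by (auto simp: insert_commute)
  obtain c where c: "is_cycle V E c" "e1 \<in> cycle_edges c"
    "walk_edges (q # (C @ A1) @ [p]) \<subseteq> cycle_edges c"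
    using cycle_through_ear[OF c1(1) w d B1(2) P1(2) IX IV chord c1(2)] by blast
  have "{last (q # C), hd (A1 @ [p])} \<in> walk_edges ((q # C) @ hd (A1 @ [p]) # tl (A1 @ [p]))"
    by (rule walk_edges_join) simp
  moreover have "(q # C) @ hd (A1 @ [p]) # tl (A1 @ [p]) = q # (C @ A1) @ [p]"
    by (cases A1) auto
  ultimately have "{s, t} \<in> walk_edges (q # (C @ A1) @ [p])" using lastP hdP by simp
  then show ?thesis using c by blast
qed

lemma cycle_edges_trans:
  assumes c1: "is_cycle V E c1" "e1 \<in> cycle_edges c1" "e2 \<in> cycle_edges c1"
    and c2: "is_cycle V E c2" "e2 \<in> cycle_edges c2" "e3 \<in> cycle_edges c2"
  shows "\<exists>c. is_cycle V E c \<and> e1 \<in> cycle_edges c \<and> e3 \<in> cycle_edges c"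
proof (cases "e3 \<in> cycle_edges c1")
  case True
  then show ?thesis using c1 by blast
next
  case False
  obtain t s M where ts: "e3 = {t, s}" "is_cycle V E (t # M @ [s])"
    "cycle_edges (t # M @ [s]) = cycle_edges c2"
    using cycle_rotate_to_edge[OF c2(1) c2(3)] by blast
  let ?P = "t # M @ [s]"
  have "cycle_edges ?P = walk_edges ((t # M) @ s # [t])"
    using ts(2) by (simp add: cycle_edges_eq_walk_edges)
  also have "\<dots> = walk_edges ?P \<union> {{s, t}}" by (subst walk_edges_append_shared) simp
  finally have ceP: "cycle_edges c2 = walk_edges ?P \<union> {{s, t}}" using ts by simp
  have "e2 \<noteq> e3" using False c1 by blast
  then have "e2 \<in> walk_edges ?P" using ceP c2 ts(1) by (auto simp: insert_commute)
  then obtain a b where ab: "e2 = {a, b}" "a \<in> set ?P" "b \<in> set ?P" using walk_edges_set by blast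
  obtain a' b' where ab': "e2 = {a', b'}" "a' \<in> set c1" "b' \<in> set c1" "E a' b'"
    using cycle_edges_set[OF c1(1) c1(3)] by blast
  have "a \<in> set c1" "b \<in> set c1" "a \<noteq> b" using ab ab' E_irrefl by (auto simp: doubleton_eq_iff)
  moreover have "{s, t} \<notin> cycle_edges c1" using False ts(1) by (simp add: insert_commute)
  ultimately show ?thesis
    using cycle_through_closing_edge[OF c1(1,2) ts(2)] ab ts(1) by (auto simp: insert_commute)
qed

lemma edge_equiv_refl: "edge_equiv V E e e"
  unfolding edge_equiv_def by simp

lemma edge_equiv_sym: "edge_equiv V E e1 e2 \<Longrightarrow> edge_equiv V E e2 e1"
  unfolding edge_equiv_def by blast

lemma edge_equiv_trans: "edge_equiv V E e1 e2 \<Longrightarrow> edge_equiv V E e2 e3 \<Longrightarrow> edge_equiv V E e1 e3"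
  unfolding edge_equiv_def using cycle_edges_trans by metis

lemma successively_set_subset_V:
  "successively E xs \<Longrightarrow> tl xs \<noteq> [] \<Longrightarrow> set xs \<subseteq> V"
proof (induction xs rule: walk_edges.induct)
  case (3 x y xs)
  then show ?case using E_V by (cases xs) auto
qed auto

section \<open>Lobes\<close>

definition lobe_of :: "'a set \<Rightarrow> 'a set set" where
  "lobe_of e = {e' \<in> edges E. edge_equiv V E e e'}"

lemma doubleton_in_edges_iff: "{x, y} \<in> edges E \<longleftrightarrow> E x y"
proof
  assume "{x, y} \<in> edges E"
  then obtain a b where ab: "{x, y} = {a, b}" "E a b" unfolding edges_def by blast
  then show "E x y" using E_sym by (auto simp: doubleton_eq_iff)
qed (auto simp: edges_def)

lemma in_edgesD: "e \<in> edges E \<Longrightarrow> \<exists>x y. e = {x, y} \<and> E x y"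
  unfolding edges_def by blast

lemma edges_subset_V: "e \<in> edges E \<Longrightarrow> e \<subseteq> V"
  using E_V by (auto simp: edges_def)

lemma lobe_of_in_lobes: "e \<in> edges E \<Longrightarrow> lobe_of e \<in> lobes V E"
  unfolding lobes_def lobe_of_def by blast

lemma lobe_of_self: "e \<in> edges E \<Longrightarrow> e \<in> lobe_of e"
  unfolding lobe_of_def using edge_equiv_refl by blast

lemma lobes_obtain: "L \<in> lobes V E \<Longrightarrow> \<exists>e. e \<in> edges E \<and> L = lobe_of e"
  unfolding lobes_def lobe_of_def by blast

lemma lobe_eq_lobe_of:
  assumes "L \<in> lobes V E" "e \<in> L"
  shows "L = lobe_of e"
proof -
  obtain e0 where L: "L = lobe_of e0" using lobes_obtain[OF assms(1)] by blast
  then have "edge_equiv V E e0 e" using assms(2) unfolding lobe_of_def by blast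
  then show ?thesis unfolding L lobe_of_def by (meson edge_equiv_sym edge_equiv_trans)
qed

lemma lobes_subset_edges: "L \<in> lobes V E \<Longrightarrow> L \<subseteq> edges E"
  unfolding lobes_def by blast

lemma lobe_has_edge: "L \<in> lobes V E \<Longrightarrow> \<exists>x y. {x, y} \<in> L \<and> E x y"
  using lobes_obtain lobe_of_self in_edgesD by blast

lemma lobes_eq_if_common_edge:
  "L \<in> lobes V E \<Longrightarrow> M \<in> lobes V E \<Longrightarrow> e \<in> L \<Longrightarrow> e \<in> M \<Longrightarrow> L = M"
  using lobe_eq_lobe_of by metis

lemma lobe_edge_adj: "L \<in> lobes V E \<Longrightarrow> {x, y} \<in> L \<Longrightarrow> E x y"
  using lobes_subset_edges doubleton_in_edges_iff by blast

lemma lobe_adj_iff: "L \<in> lobes V E \<Longrightarrow> lobe_adj L x y \<longleftrightarrow> {x, y} \<in> L"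
  unfolding lobe_adj_def using lobe_edge_adj E_irrefl by blast

lemma lobe_adj_sym: "lobe_adj L x y \<Longrightarrow> lobe_adj L y x"
  unfolding lobe_adj_def by (auto simp: insert_commute)

lemma lobe_verts_iff: "L \<in> lobes V E \<Longrightarrow> z \<in> lobe_verts L \<longleftrightarrow> (\<exists>w. {z, w} \<in> L)"
proof
  assume L: "L \<in> lobes V E" and "z \<in> lobe_verts L"
  then obtain e where "e \<in> L" "z \<in> e" unfolding lobe_verts_def by blast
  moreover obtain x y where "e = {x, y}" using \<open>e \<in> L\<close> L lobes_subset_edges in_edgesD by blast
  ultimately show "\<exists>w. {z, w} \<in> L" by (auto simp: insert_commute)
qed (auto simp: lobe_verts_def)

lemma lobe_verts_subset: "L \<in> lobes V E \<Longrightarrow> lobe_verts L \<subseteq> V"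
  using lobe_verts_iff lobe_edge_adj E_V by blast

lemma lobe_verts_other:
  assumes "L \<in> lobes V E" "z \<in> lobe_verts L"
  shows "\<exists>w. w \<in> lobe_verts L \<and> w \<noteq> z \<and> {z, w} \<in> L"
proof -
  obtain w where "{z, w} \<in> L" using assms lobe_verts_iff by blast
  moreover have "w \<noteq> z" using calculation assms lobe_edge_adj E_irrefl by blast
  ultimately show ?thesis unfolding lobe_verts_def by blast
qed

lemma lobe_verts_lobe_of: "E x y \<Longrightarrow> x \<in> lobe_verts (lobe_of {x, y}) \<and> y \<in> lobe_verts (lobe_of {x, y})"
  using lobe_of_self doubleton_in_edges_iff unfolding lobe_verts_def by blast

lemma cycle_edges_subset_lobe_of:
  "is_cycle V E c \<Longrightarrow> e \<in> cycle_edges c \<Longrightarrow> cycle_edges c \<subseteq> lobe_of e"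
  unfolding lobe_of_def edge_equiv_def using cycle_edges_set doubleton_in_edges_iff by blast

lemma successively_lobe_adj_iff:
  "L \<in> lobes V E \<Longrightarrow> successively (lobe_adj L) xs \<longleftrightarrow> successively E xs \<and> walk_edges xs \<subseteq> L"
proof (induction xs rule: walk_edges.induct)
  case (3 x y xs)
  then show ?case using lobe_adj_iff lobe_edge_adj by auto
qed auto

lemma lobe_walk_verts:
  "successively (lobe_adj L) xs \<Longrightarrow> tl xs \<noteq> [] \<Longrightarrow> set xs \<subseteq> lobe_verts L"
proof (induction xs rule: walk_edges.induct)
  case (3 x y xs)
  then have "x \<in> lobe_verts L" "y \<in> lobe_verts L"
    unfolding lobe_adj_def lobe_verts_def by auto
  then show ?case using 3 by (cases xs) auto
qed auto

lemma lobe_connected_to_edge: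
  assumes e0: "e0 \<in> edges E" "s \<in> e0" and z: "z \<in> lobe_verts (lobe_of e0)"
  shows "(lobe_adj (lobe_of e0))\<^sup>*\<^sup>* z s"
proof -
  let ?L = "lobe_of e0"
  have L: "?L \<in> lobes V E" using lobe_of_in_lobes e0 by blast
  obtain w where zw: "{z, w} \<in> ?L" using z lobe_verts_iff L by blast
  then have eq: "edge_equiv V E e0 {z, w}" unfolding lobe_of_def by blast
  show ?thesis
  proof (cases "e0 = {z, w}")
    case True
    then have "z = s \<or> lobe_adj ?L z s"
      using e0 lobe_of_self[OF e0(1)] lobe_adj_iff[OF L] by (auto simp: doubleton_eq_iff)
    then show ?thesis by blast
  next
    case False
    then obtain c where c: "is_cycle V E c" "e0 \<in> cycle_edges c" "{z, w} \<in> cycle_edges c"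
      using eq unfolding edge_equiv_def by blast
    have "z \<in> set c" using cycle_edges_set[OF c(1) c(3)] by (auto simp: doubleton_eq_iff)
    moreover have "s \<in> set c" using cycle_edges_set[OF c(1) c(2)] e0(2) by auto
    ultimately obtain xs where xs: "successively E xs" "xs \<noteq> []" "hd xs = z" "last xs = s"
      "walk_edges xs \<subseteq> cycle_edges c"
      using cycle_arc[OF c(1)] by blast
    have "walk_edges xs \<subseteq> ?L" using xs(5) cycle_edges_subset_lobe_of[OF c(1) c(2)] by blast
    then have "successively (lobe_adj ?L) xs" using successively_lobe_adj_iff L xs by blast
    then show ?thesis using successively_imp_rtranclp xs by metis
  qed
qed

lemma lobe_connected:
  assumes L: "L \<in> lobes V E" and a: "a \<in> lobe_verts L" and b: "b \<in> lobe_verts L"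
  shows "(lobe_adj L)\<^sup>*\<^sup>* a b"
proof -
  obtain e0 s t where e0: "e0 \<in> edges E" "L = lobe_of e0" "e0 = {s, t}"
    using lobes_obtain[OF L] in_edgesD by blast
  have "(lobe_adj L)\<^sup>*\<^sup>* a s" "(lobe_adj L)\<^sup>*\<^sup>* b s"
    using lobe_connected_to_edge e0 a b by auto
  moreover have "symp (lobe_adj L)" using lobe_adj_sym by (rule sympI)
  ultimately show ?thesis by (meson rtranclp_trans symp_rtranclp sympD)
qed

lemma cycle_edges_in_lobe:
  assumes L: "L \<in> lobes V E" and "e \<in> L" and c: "is_cycle V E c" "e \<in> cycle_edges c"
    and "f \<in> cycle_edges c"
  shows "f \<in> L"
  using assms cycle_edges_subset_lobe_of lobe_eq_lobe_of by blast

text \<open>Otherwise a walk inside the lobe from \<open>b\<close> back to \<open>a\<close> would close a cycle through the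
  edge \<open>{a, hd (I @ [b])}\<close>, forcing it into the lobe.\<close>

lemma no_ear_outside_lobe:
  assumes L: "L \<in> lobes V E" and w: "successively E (a # I @ [b])" and d: "distinct (a # I @ [b])"
    and a: "a \<in> lobe_verts L" and b: "b \<in> lobe_verts L" and I: "set I \<inter> lobe_verts L = {}"
    and leave: "{a, hd (I @ [b])} \<notin> L"
  shows False
proof -
  obtain Q where Q: "successively (lobe_adj L) Q" "distinct Q" "Q \<noteq> []" "hd Q = b" "last Q = a"
    using rtranclp_imp_distinct_walk[OF lobe_connected[OF L b a]] by blast
  have QE: "successively E Q" "walk_edges Q \<subseteq> L" using Q(1) successively_lobe_adj_iff[OF L] by auto
  obtain ys where ys: "Q = ys @ [a]" using Q by (metis append_butlast_last_id)
  then have "ys \<noteq> []" using Q d by auto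
  then obtain Q' where Q': "Q = b # Q' @ [a]" using Q ys by (cases ys) auto
  have setQ: "set Q \<subseteq> lobe_verts L" using lobe_walk_verts[OF Q(1)] Q' by simp
  have "successively E ((b # Q') @ a # (I @ [b]))"
    using QE w Q' by (subst successively_append_shared) simp
  moreover have "distinct (Q @ I)" using Q d I setQ by auto
  moreover have "length (Q @ I) \<ge> 3"
  proof (cases "Q' = [] \<and> I = []")
    case True
    then have "{b, a} \<in> L" using QE Q' by simp
    then show ?thesis using leave True by (simp add: insert_commute)
  qed (use Q' in \<open>auto simp: Suc_le_eq\<close>)
  moreover have "set (Q @ I) \<subseteq> V"
    using setQ lobe_verts_subset[OF L] successively_set_subset_V[OF w] by auto
  ultimately have cyc: "is_cycle V E (Q @ I) \<and> cycle_edges (Q @ I) = walk_edges (Q @ I @ [hd Q])"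
    using is_cycle_closed_walkI[of Q E I V] Q Q' by simp
  have "walk_edges (Q @ I @ [hd Q]) = walk_edges Q \<union> walk_edges (a # I @ [b])"
    using walk_edges_append_shared[of "b # Q'" a "I @ [b]"] Q Q' by simp
  then have ce: "walk_edges Q \<subseteq> cycle_edges (Q @ I)" "walk_edges (a # I @ [b]) \<subseteq> cycle_edges (Q @ I)"
    using cyc Q' by auto
  have "{b, hd (Q' @ [a])} \<in> walk_edges Q" using Q' by (cases Q') auto
  moreover have "{a, hd (I @ [b])} \<in> walk_edges (a # I @ [b])" by (cases I) auto
  ultimately have "{a, hd (I @ [b])} \<in> L"
    using cycle_edges_in_lobe[OF L _ conjunct1[OF cyc]] ce QE by blast
  then show False using leave by simp
qed

definition adj_outside :: "'a set set \<Rightarrow> 'a \<Rightarrow> 'a \<Rightarrow> bool" where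
  "adj_outside L x y \<longleftrightarrow> E x y \<and> {x, y} \<notin> L"

lemma adj_outside_sym: "adj_outside L x y \<Longrightarrow> adj_outside L y x"
  unfolding adj_outside_def using E_sym by (auto simp: insert_commute)

lemma connected_outside_lobe_eq:
  assumes L: "L \<in> lobes V E" and r: "(adj_outside L)\<^sup>*\<^sup>* a b"
    and a: "a \<in> lobe_verts L" and b: "b \<in> lobe_verts L"
  shows "a = b"
proof (rule ccontr)
  assume ab: "a \<noteq> b"
  obtain xs where xs: "successively (adj_outside L) xs" "distinct xs" "xs \<noteq> []" "hd xs = a" "last xs = b"
    using rtranclp_imp_distinct_walk[OF r] by blast
  obtain xs' where xs': "xs = a # xs'" using xs by (cases xs) auto
  have "xs' \<noteq> []" using xs xs' ab by auto
  then have "\<exists>z\<in>set xs'. z \<in> lobe_verts L" using xs xs' b by (metis last_ConsR last_in_set)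
  then obtain I w rest where sp: "xs' = I @ w # rest" "w \<in> lobe_verts L" "\<forall>z\<in>set I. z \<notin> lobe_verts L"
    using split_list_first_prop[of xs' "\<lambda>z. z \<in> lobe_verts L"] by blast
  have xe: "xs = (a # I @ [w]) @ rest" using xs' sp by simp
  have wr: "successively (adj_outside L) (a # I @ [w])"
    using xs(1) xe by (simp only: successively_append_iff)
  have "successively E (a # I @ [w])"
    using wr by (rule successively_mono) (simp add: adj_outside_def)
  moreover have "distinct (a # I @ [w])" using xs(2) xe by (metis distinct_append)
  moreover have "{a, hd (I @ [w])} \<notin> L" using wr by (cases I) (auto simp: adj_outside_def)
  ultimately show False using no_ear_outside_lobe[OF L _ _ a sp(2)] sp(3) by blast
qed

lemma adj_outside_if_lobe_adj:
  "M \<in> lobes V E \<Longrightarrow> L \<in> lobes V E \<Longrightarrow> M \<noteq> L \<Longrightarrow> lobe_adj M x y \<Longrightarrow> adj_outside L x y"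
  unfolding adj_outside_def using lobe_adj_iff lobe_edge_adj lobes_eq_if_common_edge by blast

lemma lobes_common_vertex_unique:
  assumes L: "L \<in> lobes V E" and M: "M \<in> lobes V E" and "L \<noteq> M"
    and "a \<in> lobe_verts L" "a \<in> lobe_verts M" "b \<in> lobe_verts L" "b \<in> lobe_verts M"
  shows "a = b"
proof -
  have "(lobe_adj M)\<^sup>*\<^sup>* a b" using lobe_connected[OF M] assms by blast
  then have "(adj_outside L)\<^sup>*\<^sup>* a b"
    using adj_outside_if_lobe_adj[OF M L] assms(3) by (metis mono_rtranclp)
  then show ?thesis using connected_outside_lobe_eq[OF L] assms by blast
qed

lemma lobe_induced:
  assumes M: "M \<in> lobes V E" and "x \<in> lobe_verts M" "y \<in> lobe_verts M" "E x y"
  shows "{x, y} \<in> M"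
proof -
  have "{x, y} \<in> edges E" using assms doubleton_in_edges_iff by blast
  then have N: "lobe_of {x, y} \<in> lobes V E" "{x, y} \<in> lobe_of {x, y}"
    using lobe_of_in_lobes lobe_of_self by blast+
  then have "lobe_of {x, y} = M"
    using lobes_common_vertex_unique[OF N(1) M] lobe_verts_lobe_of assms E_irrefl by blast
  then show ?thesis using N by simp
qed

lemma adj_iff_lobe_adj:
  "L \<in> lobes V E \<Longrightarrow> a \<in> lobe_verts L \<Longrightarrow> b \<in> lobe_verts L \<Longrightarrow> E a b \<longleftrightarrow> lobe_adj L a b"
  using lobe_induced lobe_adj_iff lobe_edge_adj by blast

definition lobes_at :: "'a \<Rightarrow> 'a set set set" where
  "lobes_at z = {L \<in> lobes V E. z \<in> lobe_verts L}"

lemma lobes_at_iff: "M \<in> lobes_at z \<longleftrightarrow> M \<in> lobes V E \<and> z \<in> lobe_verts M"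
  unfolding lobes_at_def by simp

end

section \<open>Automorphisms permute the lobes\<close>

definition image_edges :: "('a \<Rightarrow> 'b) \<Rightarrow> 'a set set \<Rightarrow> 'b set set" where
  "image_edges f L = (\<lambda>e. f ` e) ` L"

lemma lobe_verts_image_edges: "lobe_verts (image_edges f L) = f ` lobe_verts L"
  unfolding image_edges_def lobe_verts_def by blast

lemma image_edges_inverse:
  assumes "\<And>x. x \<in> A \<Longrightarrow> g (f x) = x" "\<Union>L \<subseteq> A"
  shows "image_edges g (image_edges f L) = L"
proof -
  have "g ` f ` e = e" if "e \<in> L" for e
  proof -
    have "\<forall>x\<in>e. g (f x) = x" using assms that by blast
    then show ?thesis by (simp add: image_image)
  qed
  then show ?thesis unfolding image_edges_def image_image by simp
qed

context sgraph
begin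

lemma is_automorphism_inv_into:
  assumes f: "is_automorphism V E f"
  shows "is_automorphism V E (inv_into V f)"
proof -
  have b: "bij_betw f V V" using f unfolding is_automorphism_def by blast
  have bi: "bij_betw (inv_into V f) V V" using bij_betw_inv_into[OF b] .
  have "E x y \<longleftrightarrow> E (inv_into V f x) (inv_into V f y)" if "x \<in> V" "y \<in> V" for x y
  proof -
    have "inv_into V f x \<in> V" "inv_into V f y \<in> V" using bi that by (auto simp: bij_betw_def)
    then have "E (inv_into V f x) (inv_into V f y) \<longleftrightarrow> E (f (inv_into V f x)) (f (inv_into V f y))"
      using f unfolding is_automorphism_def by blast
    then show ?thesis using b that by (simp add: bij_betw_inv_into_right)
  qed
  then show ?thesis unfolding is_automorphism_def using bi by blast
qed

lemma is_cycle_map: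
  assumes f: "is_automorphism V E f" and c: "is_cycle V E c"
  shows "is_cycle V E (map f c) \<and> cycle_edges (map f c) = image_edges f (cycle_edges c)"
proof -
  have ne: "c \<noteq> []" using c by (auto simp: is_cycle_def)
  then have cV: "set c \<subseteq> V" and d: "distinct c" and l: "length c \<ge> 3"
    and w: "successively E (c @ [hd c])"
    using c by (simp_all add: is_cycle_iff_closed_walk)
  have inj: "inj_on f V" and fV: "f ` V \<subseteq> V" and fE: "\<And>x y. x \<in> V \<Longrightarrow> y \<in> V \<Longrightarrow> E x y \<longleftrightarrow> E (f x) (f y)"
    using f unfolding is_automorphism_def bij_betw_def by auto
  have "successively (\<lambda>x y. E (f x) (f y)) (c @ [hd c])"
    using w by (rule successively_mono) (use fE cV hd_in_set[OF ne] in auto)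
  then have "successively E (map f (c @ [hd c]))"
    by (simp only: successively_map)
  then have "successively E (map f c @ [hd (map f c)])"
    using ne by (simp add: hd_map)
  moreover have "distinct (map f c)" using d inj cV by (simp add: distinct_map inj_on_subset)
  moreover have "set (map f c) \<subseteq> V" using cV fV by auto
  ultimately have "is_cycle V E (map f c)"
    using l ne by (simp add: is_cycle_iff_closed_walk)
  moreover have "cycle_edges (map f c) = image_edges f (cycle_edges c)"
    using ne walk_edges_map[of f "c @ [hd c]"]
    by (simp add: cycle_edges_eq_walk_edges hd_map image_edges_def)
  ultimately show ?thesis by blast
qed

lemma image_in_edges:
  assumes f: "is_automorphism V E f" and e: "e \<in> edges E"
  shows "f ` e \<in> edges E"
proof -
  obtain x y where xy: "e = {x, y}" "E x y" using in_edgesD[OF e] by blast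
  then have "E (f x) (f y)" using f E_V unfolding is_automorphism_def by blast
  then show ?thesis using xy doubleton_in_edges_iff by simp
qed

lemma edge_equiv_image:
  assumes f: "is_automorphism V E f" and eq: "edge_equiv V E e1 e2"
  shows "edge_equiv V E (f ` e1) (f ` e2)"
  using eq is_cycle_map[OF f] unfolding edge_equiv_def image_edges_def by blast

lemma image_edges_lobe_of:
  assumes f: "is_automorphism V E f" and e0: "e0 \<in> edges E"
  shows "image_edges f (lobe_of e0) = lobe_of (f ` e0)"
proof
  show "image_edges f (lobe_of e0) \<subseteq> lobe_of (f ` e0)"
    using image_in_edges[OF f] edge_equiv_image[OF f]
    unfolding image_edges_def lobe_of_def by blast
next
  let ?g = "inv_into V f"
  have g: "is_automorphism V E ?g" using is_automorphism_inv_into[OF f] .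
  have fg: "f (?g x) = x" and gf: "?g (f x) = x" if "x \<in> V" for x
    using f that unfolding is_automorphism_def
    by (auto simp: bij_betw_inv_into_right bij_betw_inv_into_left)
  show "lobe_of (f ` e0) \<subseteq> image_edges f (lobe_of e0)"
  proof
    fix e' assume e': "e' \<in> lobe_of (f ` e0)"
    then have e'E: "e' \<in> edges E" "edge_equiv V E (f ` e0) e'" unfolding lobe_of_def by auto
    have "?g ` f ` e0 = e0" using gf edges_subset_V[OF e0] by (force simp: image_image)
    then have "?g ` e' \<in> lobe_of e0"
      using edge_equiv_image[OF g e'E(2)] image_in_edges[OF g e'E(1)] unfolding lobe_of_def by simp
    moreover have "f ` ?g ` e' = e'" using fg edges_subset_V[OF e'E(1)] by (force simp: image_image)
    ultimately show "e' \<in> image_edges f (lobe_of e0)" unfolding image_edges_def by (metis image_eqI)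
  qed
qed

lemma image_edges_in_lobes:
  assumes f: "is_automorphism V E f" and L: "L \<in> lobes V E"
  shows "image_edges f L \<in> lobes V E"
proof -
  obtain e where "e \<in> edges E" "L = lobe_of e" using lobes_obtain[OF L] by blast
  then show ?thesis using image_edges_lobe_of[OF f] lobe_of_in_lobes image_in_edges[OF f] by simp
qed

lemma lobe_adj_image_edges:
  assumes f: "is_automorphism V E f" and L: "L \<in> lobes V E" and ab: "a \<in> V" "b \<in> V"
  shows "lobe_adj (image_edges f L) (f a) (f b) \<longleftrightarrow> lobe_adj L a b"
proof -
  have inj: "inj_on f V" using f unfolding is_automorphism_def bij_betw_def by blast
  have "{f a, f b} \<in> image_edges f L \<longleftrightarrow> {a, b} \<in> L"
  proof
    assume "{f a, f b} \<in> image_edges f L"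
    then obtain e where e: "e \<in> L" "f ` e = f ` {a, b}" unfolding image_edges_def by (auto elim!: imageE)
    moreover have "e \<subseteq> V" using e L lobes_subset_edges edges_subset_V by blast
    ultimately have "e = {a, b}" using inj_on_image_eq_iff[OF inj, of e "{a, b}"] ab by simp
    then show "{a, b} \<in> L" using e by simp
  next
    assume "{a, b} \<in> L"
    then have "f ` {a, b} \<in> image_edges f L" unfolding image_edges_def by blast
    then show "{f a, f b} \<in> image_edges f L" by simp
  qed
  moreover have "f a \<noteq> f b \<longleftrightarrow> a \<noteq> b" using inj ab unfolding inj_on_def by blast
  ultimately show ?thesis unfolding lobe_adj_def by blast
qed

lemma graph_iso_image_edges:
  assumes f: "is_automorphism V E f" and L: "L \<in> lobes V E"
  shows "bij_betw f (lobe_verts L) (lobe_verts (image_edges f L))"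
    "\<forall>a\<in>lobe_verts L. \<forall>b\<in>lobe_verts L. lobe_adj L a b \<longleftrightarrow> lobe_adj (image_edges f L) (f a) (f b)"
proof -
  have inj: "inj_on f V" using f unfolding is_automorphism_def bij_betw_def by blast
  show "bij_betw f (lobe_verts L) (lobe_verts (image_edges f L))"
    unfolding bij_betw_def lobe_verts_image_edges
    using inj_on_subset[OF inj lobe_verts_subset[OF L]] by blast
  show "\<forall>a\<in>lobe_verts L. \<forall>b\<in>lobe_verts L. lobe_adj L a b \<longleftrightarrow> lobe_adj (image_edges f L) (f a) (f b)"
    using lobe_adj_image_edges[OF f L] lobe_verts_subset[OF L] by blast
qed

lemma image_edges_eq_lobe:
  assumes f: "is_automorphism V E f" and L: "L \<in> lobes V E" and M: "M \<in> lobes V E"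
    and "{x, y} \<in> L" "{f x, f y} \<in> M"
  shows "image_edges f L = M"
proof -
  have "f ` {x, y} \<in> image_edges f L" using assms(4) unfolding image_edges_def by blast
  then show ?thesis
    using lobes_eq_if_common_edge[OF image_edges_in_lobes[OF f L] M] assms(5) by simp
qed

lemma bij_betw_image_edges_lobes_at:
  assumes f: "is_automorphism V E f" and u: "u \<in> V"
  shows "bij_betw (image_edges f) (lobes_at u) (lobes_at (f u))"
proof -
  let ?g = "inv_into V f"
  have g: "is_automorphism V E ?g" using is_automorphism_inv_into[OF f] .
  have fg: "f (?g x) = x" and gf: "?g (f x) = x" if "x \<in> V" for x
    using f that unfolding is_automorphism_def
    by (auto simp: bij_betw_inv_into_right bij_betw_inv_into_left)
  have lobe_V: "\<Union>L \<subseteq> V" if "L \<in> lobes V E" for L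
    using lobe_verts_subset[OF that] unfolding lobe_verts_def .
  show ?thesis
  proof (rule bij_betw_byWitness[where f' = "image_edges ?g"])
    show "\<forall>L\<in>lobes_at u. image_edges ?g (image_edges f L) = L"
      using image_edges_inverse[of V ?g f, OF gf lobe_V] unfolding lobes_at_def by blast
    show "\<forall>M\<in>lobes_at (f u). image_edges f (image_edges ?g M) = M"
      using image_edges_inverse[of V f ?g, OF fg lobe_V] unfolding lobes_at_def by blast
    show "image_edges f ` lobes_at u \<subseteq> lobes_at (f u)"
      using image_edges_in_lobes[OF f] by (auto simp: lobes_at_def lobe_verts_image_edges)
    show "image_edges ?g ` lobes_at (f u) \<subseteq> lobes_at u"
    proof
      fix L assume "L \<in> image_edges ?g ` lobes_at (f u)"
      then obtain M where M: "M \<in> lobes V E" "f u \<in> lobe_verts M" "L = image_edges ?g M"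
        unfolding lobes_at_def by blast
      then have "?g (f u) \<in> lobe_verts L" by (simp add: lobe_verts_image_edges)
      then show "L \<in> lobes_at u" using M image_edges_in_lobes[OF g] gf[OF u] unfolding lobes_at_def by simp
    qed
  qed
qed

lemma arc_transitiveD:
  "arc_transitive V E \<Longrightarrow> E u v \<Longrightarrow> E x y \<Longrightarrow> \<exists>f. is_automorphism V E f \<and> f u = x \<and> f v = y"
  using E_V unfolding arc_transitive_def by blast

lemma arc_transitive_lobe:
  assumes at: "arc_transitive V E" and L: "L \<in> lobes V E"
  shows "arc_transitive (lobe_verts L) (lobe_adj L)"
  unfolding arc_transitive_def
proof (intro allI impI)
  fix u v x y
  assume "u \<in> lobe_verts L \<and> v \<in> lobe_verts L \<and> lobe_adj L u v \<and>
    x \<in> lobe_verts L \<and> y \<in> lobe_verts L \<and> lobe_adj L x y"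
  then have uv: "E u v" "{u, v} \<in> L" and xy: "E x y" "{x, y} \<in> L"
    using lobe_adj_iff[OF L] lobe_edge_adj[OF L] by blast+
  obtain f where f: "is_automorphism V E f" "f u = x" "f v = y" using arc_transitiveD[OF at uv(1) xy(1)] by blast
  then have "image_edges f L = L" using image_edges_eq_lobe[OF f(1) L L uv(2)] xy by simp
  then have "is_automorphism (lobe_verts L) (lobe_adj L) f"
    using graph_iso_image_edges[OF f(1) L] unfolding is_automorphism_def by simp
  then show "\<exists>f. is_automorphism (lobe_verts L) (lobe_adj L) f \<and> f u = x \<and> f v = y" using f by blast
qed

lemma arc_transitive_lobes_iso:
  assumes at: "arc_transitive V E" and L1: "L1 \<in> lobes V E" and L2: "L2 \<in> lobes V E"
  shows "graph_iso (lobe_verts L1) (lobe_adj L1) (lobe_verts L2) (lobe_adj L2)"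
proof -
  obtain u v x y where uv: "{u, v} \<in> L1" "E u v" and xy: "{x, y} \<in> L2" "E x y"
    using lobe_has_edge[OF L1] lobe_has_edge[OF L2] by blast
  obtain f where f: "is_automorphism V E f" "f u = x" "f v = y" using arc_transitiveD[OF at uv(2) xy(2)] by blast
  have "image_edges f L1 = L2" using image_edges_eq_lobe[OF f(1) L1 L2 uv(1)] f xy by simp
  then show ?thesis using graph_iso_image_edges[OF f(1) L1] unfolding graph_iso_def by metis
qed

lemma arc_transitive_lobes_at_eqpoll:
  assumes at: "arc_transitive V E" and nb: "\<forall>w\<in>V. \<exists>w'. E w w'" and u: "u \<in> V" and v: "v \<in> V"
  shows "lobes_at u \<approx> lobes_at v"
proof -
  obtain u' v' where "E u u'" "E v v'" using nb u v by blast
  then obtain f where "is_automorphism V E f" "f u = v" using arc_transitiveD[OF at] by blast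
  then show ?thesis using bij_betw_image_edges_lobes_at[OF _ u] unfolding eqpoll_def by metis
qed

end

section \<open>Lobe-closed vertex sets\<close>

lemma chain_subset_Union_two:
  assumes C: "chain\<^sub>\<subseteq> C" and "a \<in> \<Union>C" "b \<in> \<Union>C"
  shows "\<exists>D\<in>C. a \<in> D \<and> b \<in> D"
proof -
  obtain A B where AB: "A \<in> C" "a \<in> A" "B \<in> C" "b \<in> B" using assms by blast
  then have "A \<subseteq> B \<or> B \<subseteq> A" using C unfolding chain_subset_def by blast
  then show ?thesis using AB by blast
qed

lemma chain_subset_upper_bound:
  assumes C: "chain\<^sub>\<subseteq> C" and "A \<in> C" "B \<in> C"
  shows "\<exists>D\<in>C. A \<subseteq> D \<and> B \<subseteq> D"
proof -
  have "A \<subseteq> B \<or> B \<subseteq> A" using assms unfolding chain_subset_def by blast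
  then show ?thesis using assms(2,3) by blast
qed

lemma chain_subset_image:
  assumes C: "chain\<^sub>\<subseteq> C" and f: "\<And>A B. A \<subseteq> B \<Longrightarrow> f A \<subseteq> f B"
  shows "chain\<^sub>\<subseteq> (f ` C)"
  unfolding chain_subset_def
proof (intro ballI)
  fix X Y assume "X \<in> f ` C" "Y \<in> f ` C"
  then obtain A B where AB: "A \<in> C" "B \<in> C" "X = f A" "Y = f B" by blast
  then have "A \<subseteq> B \<or> B \<subseteq> A" using C unfolding chain_subset_def by blast
  then show "X \<subseteq> Y \<or> Y \<subseteq> X" using AB f by blast
qed

context sgraph
begin

definition induced_adj :: "'a set \<Rightarrow> 'a \<Rightarrow> 'a \<Rightarrow> bool" where
  "induced_adj D x y \<longleftrightarrow> x \<in> D \<and> y \<in> D \<and> E x y"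

text \<open>Lobe-closed sets are the connected unions of lobes.\<close>

definition lobe_closed :: "'a set \<Rightarrow> bool" where
  "lobe_closed D \<longleftrightarrow> D \<subseteq> V \<and> (\<forall>x\<in>D. \<forall>y\<in>D. E x y \<longrightarrow> lobe_verts (lobe_of {x, y}) \<subseteq> D)
     \<and> (\<forall>a\<in>D. \<forall>b\<in>D. (induced_adj D)\<^sup>*\<^sup>* a b) \<and> (\<forall>z\<in>D. \<exists>M\<in>lobes_at z. lobe_verts M \<subseteq> D)"

definition attach_lobes :: "'a set \<Rightarrow> 'a \<Rightarrow> 'a set" where
  "attach_lobes D z = D \<union> \<Union>{lobe_verts M | M. M \<in> lobes_at z}"

definition lobes_within :: "'a set \<Rightarrow> 'a \<Rightarrow> 'a set set set" where
  "lobes_within D z = {M \<in> lobes_at z. lobe_verts M \<subseteq> D}"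

lemma lobe_closedD:
  assumes "lobe_closed D"
  shows "D \<subseteq> V"
    and "x \<in> D \<Longrightarrow> y \<in> D \<Longrightarrow> E x y \<Longrightarrow> lobe_verts (lobe_of {x, y}) \<subseteq> D"
    and "a \<in> D \<Longrightarrow> b \<in> D \<Longrightarrow> (induced_adj D)\<^sup>*\<^sup>* a b"
    and "z \<in> D \<Longrightarrow> \<exists>M\<in>lobes_at z. lobe_verts M \<subseteq> D"
  using assms unfolding lobe_closed_def by blast+

lemma lobe_closedI:
  assumes "D \<subseteq> V" "\<And>x y. x \<in> D \<Longrightarrow> y \<in> D \<Longrightarrow> E x y \<Longrightarrow> lobe_verts (lobe_of {x, y}) \<subseteq> D"
    "\<And>a b. a \<in> D \<Longrightarrow> b \<in> D \<Longrightarrow> (induced_adj D)\<^sup>*\<^sup>* a b"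
    "\<And>z. z \<in> D \<Longrightarrow> \<exists>M\<in>lobes_at z. lobe_verts M \<subseteq> D"
  shows "lobe_closed D"
  unfolding lobe_closed_def using assms by blast

lemma adj_outside_if_induced_adj:
  assumes D: "lobe_closed D" and K: "K \<in> lobes V E" "\<not> lobe_verts K \<subseteq> D" and xy: "induced_adj D x y"
  shows "adj_outside K x y"
proof -
  have xyD: "x \<in> D" "y \<in> D" "E x y" using xy unfolding induced_adj_def by auto
  have "{x, y} \<notin> K"
  proof
    assume "{x, y} \<in> K"
    then have "K = lobe_of {x, y}" using lobe_eq_lobe_of K(1) by blast
    then have "lobe_verts K \<subseteq> D" using lobe_closedD(2)[OF D xyD] by simp
    then show False using K(2) by blast
  qed
  then show ?thesis using xyD unfolding adj_outside_def by simp
qed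

lemma lobe_closed_inter_lobe:
  assumes D: "lobe_closed D" and z: "z \<in> D" and M: "M \<in> lobes_at z" and out: "\<not> lobe_verts M \<subseteq> D"
  shows "lobe_verts M \<inter> D = {z}"
proof -
  have Mz: "M \<in> lobes V E" "z \<in> lobe_verts M" using M lobes_at_iff by auto
  have "a = z" if a: "a \<in> lobe_verts M" "a \<in> D" for a
  proof -
    have "(adj_outside M)\<^sup>*\<^sup>* z a"
      using lobe_closedD(3)[OF D z a(2)] adj_outside_if_induced_adj[OF D Mz(1) out]
      by (metis mono_rtranclp)
    then show "a = z" using connected_outside_lobe_eq[OF Mz(1) _ Mz(2) a(1)] by simp
  qed
  then show ?thesis using Mz z by blast
qed

text \<open>All of \<open>attach_lobes D z\<close> is connected to \<open>z\<close> without using edges of \<open>K\<close>.\<close>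

lemma attach_lobes_inter_lobe:
  assumes D: "lobe_closed D" and z: "z \<in> D" and K: "K \<in> lobes V E" "z \<notin> lobe_verts K"
    "\<not> lobe_verts K \<subseteq> D"
    and a: "a \<in> attach_lobes D z" "a \<in> lobe_verts K" and b: "b \<in> attach_lobes D z" "b \<in> lobe_verts K"
  shows "a = b"
proof -
  have to_z: "(adj_outside K)\<^sup>*\<^sup>* x z" if x: "x \<in> attach_lobes D z" for x
  proof (cases "x \<in> D")
    case True
    then show ?thesis
      using lobe_closedD(3)[OF D True z] adj_outside_if_induced_adj[OF D K(1,3)]
      by (metis mono_rtranclp)
  next
    case False
    then obtain M where M: "M \<in> lobes V E" "z \<in> lobe_verts M" "x \<in> lobe_verts M"
      using x unfolding attach_lobes_def lobes_at_def by blast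
    then have "M \<noteq> K" using K by blast
    then show ?thesis
      using lobe_connected[OF M(1) M(3) M(2)] adj_outside_if_lobe_adj[OF M(1) K(1)]
      by (metis mono_rtranclp)
  qed
  have "symp (adj_outside K)" using adj_outside_sym by (rule sympI)
  then have "(adj_outside K)\<^sup>*\<^sup>* a b"
    using to_z[OF a(1)] to_z[OF b(1)] by (meson rtranclp_trans symp_rtranclp sympD)
  then show ?thesis using connected_outside_lobe_eq[OF K(1) _ a(2) b(2)] by simp
qed

lemma attach_lobes_connected_to_centre:
  assumes D: "lobe_closed D" and z: "z \<in> D" and a: "a \<in> attach_lobes D z"
  shows "(induced_adj (attach_lobes D z))\<^sup>*\<^sup>* a z"
proof (cases "a \<in> D")
  case True
  have "induced_adj D x y \<Longrightarrow> induced_adj (attach_lobes D z) x y" for x y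
    unfolding induced_adj_def attach_lobes_def by blast
  then show ?thesis using lobe_closedD(3)[OF D True z] by (metis mono_rtranclp)
next
  case False
  then obtain M where M: "M \<in> lobes V E" "z \<in> lobe_verts M" "a \<in> lobe_verts M"
    using a unfolding attach_lobes_def lobes_at_def by blast
  have "lobe_adj M x y \<Longrightarrow> induced_adj (attach_lobes D z) x y" for x y
    using M lobe_adj_iff lobe_edge_adj unfolding induced_adj_def attach_lobes_def lobes_at_def
      lobe_verts_def by blast
  then show ?thesis using lobe_connected[OF M(1) M(3) M(2)] by (metis mono_rtranclp)
qed

lemma lobe_closed_attach_lobes:
  assumes D: "lobe_closed D" and z: "z \<in> D"
  shows "lobe_closed (attach_lobes D z)"
proof (rule lobe_closedI)
  let ?D = "attach_lobes D z"
  have sub: "D \<subseteq> ?D" unfolding attach_lobes_def by blast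
  show "?D \<subseteq> V"
    using lobe_closedD(1)[OF D] lobe_verts_subset unfolding attach_lobes_def lobes_at_def by blast
  show "lobe_verts (lobe_of {x, y}) \<subseteq> ?D" if xy: "x \<in> ?D" "y \<in> ?D" "E x y" for x y
  proof -
    let ?N = "lobe_of {x, y}"
    have N: "?N \<in> lobes V E" "x \<in> lobe_verts ?N" "y \<in> lobe_verts ?N"
      using lobe_of_in_lobes lobe_verts_lobe_of doubleton_in_edges_iff xy(3) by blast+
    consider "z \<in> lobe_verts ?N" | "lobe_verts ?N \<subseteq> D" | "z \<notin> lobe_verts ?N" "\<not> lobe_verts ?N \<subseteq> D"
      by blast
    then show ?thesis
    proof cases
      case 1
      then show ?thesis using N unfolding attach_lobes_def lobes_at_def by blast
    next
      case 3
      then have "x = y" using attach_lobes_inter_lobe[OF D z N(1)] xy N by blast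
      then show ?thesis using E_irrefl xy by blast
    qed (use sub in blast)
  qed
  have "symp (induced_adj ?D)" unfolding induced_adj_def using E_sym by (blast intro: sympI)
  then show "(induced_adj ?D)\<^sup>*\<^sup>* a b" if "a \<in> ?D" "b \<in> ?D" for a b
    using attach_lobes_connected_to_centre[OF D z] that by (meson rtranclp_trans symp_rtranclp sympD)
  show "\<exists>M\<in>lobes_at a. lobe_verts M \<subseteq> ?D" if a: "a \<in> ?D" for a
  proof (cases "a \<in> D")
    case True
    then show ?thesis using lobe_closedD(4)[OF D] sub by blast
  next
    case False
    then obtain M where "M \<in> lobes_at z" "a \<in> lobe_verts M"
      using a unfolding attach_lobes_def by blast
    then have "M \<in> lobes_at a" "lobe_verts M \<subseteq> ?D" unfolding lobes_at_def attach_lobes_def by auto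
    then show ?thesis by blast
  qed
qed

lemma edge_into_attached_lobe:
  assumes D: "lobe_closed D" and z: "z \<in> D" and M: "M \<in> lobes_at z" "\<not> lobe_verts M \<subseteq> D"
    and a: "a \<in> D" and b: "b \<in> lobe_verts M" "b \<noteq> z" and ab: "E a b"
  shows "a = z"
proof -
  let ?N = "lobe_of {a, b}"
  have N: "?N \<in> lobes V E" "a \<in> lobe_verts ?N" "b \<in> lobe_verts ?N"
    using lobe_of_in_lobes lobe_verts_lobe_of doubleton_in_edges_iff ab by blast+
  have Mz: "M \<in> lobes V E" "z \<in> lobe_verts M" using M(1) lobes_at_iff by auto
  have MD: "lobe_verts M \<inter> D = {z}" using lobe_closed_inter_lobe[OF D z M] .
  then have bD: "b \<notin> D" using b by blast
  show ?thesis
  proof (cases "?N = M")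
    case True
    then show ?thesis using MD N a by blast
  next
    case False
    have "z \<notin> lobe_verts ?N" using lobes_common_vertex_unique[OF N(1) Mz(1) False] N Mz b by blast
    moreover have "\<not> lobe_verts ?N \<subseteq> D" using N bD by blast
    moreover have "a \<in> attach_lobes D z" "b \<in> attach_lobes D z"
      using a b M unfolding attach_lobes_def by blast+
    ultimately have "a = b" using attach_lobes_inter_lobe[OF D z N(1)] N by blast
    then show ?thesis using a bD by blast
  qed
qed

lemma no_edge_between_attached_lobes:
  assumes D: "lobe_closed D" and z: "z \<in> D"
    and M1: "M1 \<in> lobes_at z" "\<not> lobe_verts M1 \<subseteq> D" and M2: "M2 \<in> lobes_at z" "M1 \<noteq> M2"
    and a: "a \<in> lobe_verts M1" "a \<noteq> z" and b: "b \<in> lobe_verts M2" "b \<noteq> z"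
  shows "\<not> E a b"
proof
  assume ab: "E a b"
  let ?N = "lobe_of {a, b}"
  have N: "?N \<in> lobes V E" "a \<in> lobe_verts ?N" "b \<in> lobe_verts ?N"
    using lobe_of_in_lobes lobe_verts_lobe_of doubleton_in_edges_iff ab by blast+
  have Mz: "M1 \<in> lobes V E" "z \<in> lobe_verts M1" "M2 \<in> lobes V E" "z \<in> lobe_verts M2"
    using M1 M2 lobes_at_iff by auto
  have aD: "a \<notin> D" using lobe_closed_inter_lobe[OF D z M1] a by blast
  have "?N \<noteq> M1" using lobes_common_vertex_unique[OF Mz(1) Mz(3) M2(2)] N Mz b by blast
  then have "z \<notin> lobe_verts ?N" using lobes_common_vertex_unique[OF N(1) Mz(1)] N Mz a by blast
  moreover have "\<not> lobe_verts ?N \<subseteq> D" using N aD by blast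
  moreover have "a \<in> attach_lobes D z" "b \<in> attach_lobes D z"
    using a b M1 M2 unfolding attach_lobes_def by blast+
  ultimately have "a = b" using attach_lobes_inter_lobe[OF D z N(1)] N by blast
  then show False using lobes_common_vertex_unique[OF Mz(1) Mz(3) M2(2)] a b Mz by blast
qed

lemma lobes_within_attach_lobes_centre:
  "lobes_within (attach_lobes D z) z = lobes_at z"
  unfolding lobes_within_def attach_lobes_def by blast

lemma lobes_within_attach_lobes_old:
  assumes D: "lobe_closed D" and z: "z \<in> D" and w: "w \<in> D" "w \<noteq> z"
  shows "lobes_within (attach_lobes D z) w = lobes_within D w"
proof
  show "lobes_within (attach_lobes D z) w \<subseteq> lobes_within D w"
  proof
    fix K assume "K \<in> lobes_within (attach_lobes D z) w"
    then have K: "K \<in> lobes V E" "w \<in> lobe_verts K" "lobe_verts K \<subseteq> attach_lobes D z"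
      unfolding lobes_within_def lobes_at_def by auto
    have "lobe_verts K \<subseteq> D"
    proof (rule ccontr)
      assume out: "\<not> lobe_verts K \<subseteq> D"
      obtain w2 where w2: "w2 \<in> lobe_verts K" "w2 \<noteq> w" using lobe_verts_other[OF K(1,2)] by blast
      show False
      proof (cases "z \<in> lobe_verts K")
        case True
        then show False
          using lobe_closed_inter_lobe[OF D z _ out] K(1,2) w lobes_at_iff by blast
      next
        case False
        then show False using attach_lobes_inter_lobe[OF D z K(1) False out] K w2 by blast
      qed
    qed
    then show "K \<in> lobes_within D w" using K unfolding lobes_within_def lobes_at_def by blast
  qed
  show "lobes_within D w \<subseteq> lobes_within (attach_lobes D z) w"
    unfolding lobes_within_def attach_lobes_def by blast
qed

lemma lobes_within_attach_lobes_new: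
  assumes D: "lobe_closed D" and z: "z \<in> D" and M: "M \<in> lobes_at z"
    and w: "w \<in> lobe_verts M" "w \<notin> D"
  shows "lobes_within (attach_lobes D z) w = {M}"
proof
  have Mz: "M \<in> lobes V E" "z \<in> lobe_verts M" using M lobes_at_iff by auto
  show "lobes_within (attach_lobes D z) w \<subseteq> {M}"
  proof
    fix K assume "K \<in> lobes_within (attach_lobes D z) w"
    then have K: "K \<in> lobes V E" "w \<in> lobe_verts K" "lobe_verts K \<subseteq> attach_lobes D z"
      unfolding lobes_within_def lobes_at_def by auto
    show "K \<in> {M}"
    proof (rule ccontr)
      assume "K \<notin> {M}"
      then have "z \<notin> lobe_verts K"
        using lobes_common_vertex_unique[OF K(1) Mz(1)] K Mz w z by blast
      moreover have "\<not> lobe_verts K \<subseteq> D" using K w by blast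
      moreover obtain w2 where "w2 \<in> lobe_verts K" "w2 \<noteq> w" using lobe_verts_other[OF K(1,2)] by blast
      ultimately show False using attach_lobes_inter_lobe[OF D z K(1)] K by blast
    qed
  qed
  show "{M} \<subseteq> lobes_within (attach_lobes D z) w"
    using M w unfolding lobes_within_def attach_lobes_def lobes_at_def by blast
qed

lemma lobe_closed_lobe_verts:
  assumes L: "L \<in> lobes V E"
  shows "lobe_closed (lobe_verts L)"
proof (rule lobe_closedI)
  show "lobe_verts L \<subseteq> V" using lobe_verts_subset[OF L] .
  show "lobe_verts (lobe_of {x, y}) \<subseteq> lobe_verts L"
    if "x \<in> lobe_verts L" "y \<in> lobe_verts L" "E x y" for x y
    using lobe_eq_lobe_of[OF L lobe_induced[OF L that]] by simp
  have "lobe_adj L x y \<Longrightarrow> induced_adj (lobe_verts L) x y" for x y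
    unfolding induced_adj_def lobe_verts_def using lobe_adj_iff[OF L] lobe_edge_adj[OF L] by blast
  then show "(induced_adj (lobe_verts L))\<^sup>*\<^sup>* a b" if "a \<in> lobe_verts L" "b \<in> lobe_verts L" for a b
    using lobe_connected[OF L that] by (metis mono_rtranclp)
  show "\<exists>M\<in>lobes_at z. lobe_verts M \<subseteq> lobe_verts L" if "z \<in> lobe_verts L" for z
    using L that unfolding lobes_at_def by blast
qed

lemma lobes_within_lobe_verts:
  assumes L: "L \<in> lobes V E" and a: "a \<in> lobe_verts L"
  shows "lobes_within (lobe_verts L) a = {L}"
proof -
  have "K = L" if K: "K \<in> lobes V E" "a \<in> lobe_verts K" "lobe_verts K \<subseteq> lobe_verts L" for K
  proof (rule ccontr)
    assume "K \<noteq> L"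
    moreover obtain w where "w \<in> lobe_verts K" "w \<noteq> a" using lobe_verts_other[OF K(1,2)] by blast
    ultimately show False using lobes_common_vertex_unique[OF K(1) L] K a by blast
  qed
  then show ?thesis using L a unfolding lobes_within_def lobes_at_def by blast
qed

lemma lobe_closed_Union_chain:
  assumes C: "chain\<^sub>\<subseteq> C" "\<forall>D\<in>C. lobe_closed D"
  shows "lobe_closed (\<Union>C)"
proof (rule lobe_closedI)
  show "\<Union>C \<subseteq> V" using C(2) lobe_closedD(1) by blast
  show "lobe_verts (lobe_of {x, y}) \<subseteq> \<Union>C" if xy: "x \<in> \<Union>C" "y \<in> \<Union>C" "E x y" for x y
  proof -
    obtain D where D: "D \<in> C" "x \<in> D" "y \<in> D" using chain_subset_Union_two[OF C(1) xy(1,2)] by blast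
    then show ?thesis using lobe_closedD(2)[of D x y] C(2) xy(3) by blast
  qed
  show "(induced_adj (\<Union>C))\<^sup>*\<^sup>* a b" if ab: "a \<in> \<Union>C" "b \<in> \<Union>C" for a b
  proof -
    obtain D where D: "D \<in> C" "a \<in> D" "b \<in> D" using chain_subset_Union_two[OF C(1) ab] by blast
    have "induced_adj D x y \<Longrightarrow> induced_adj (\<Union>C) x y" for x y
      using D unfolding induced_adj_def by blast
    then show ?thesis using lobe_closedD(3)[of D a b] C(2) D by (metis mono_rtranclp)
  qed
  show "\<exists>M\<in>lobes_at z. lobe_verts M \<subseteq> \<Union>C" if z: "z \<in> \<Union>C" for z
  proof -
    obtain D where D: "D \<in> C" "z \<in> D" using z by blast
    then show ?thesis using lobe_closedD(4)[of D z] C(2) by blast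
  qed
qed

section \<open>Admissible partial isomorphisms\<close>

definition saturated_at :: "('a \<times> 'a) set \<Rightarrow> 'a \<Rightarrow> 'a \<Rightarrow> bool" where
  "saturated_at F z z' \<longleftrightarrow> lobes_within (Domain F) z = lobes_at z \<and> lobes_within (Range F) z' = lobes_at z'"

definition single_lobe_at :: "('a \<times> 'a) set \<Rightarrow> 'a \<Rightarrow> 'a \<Rightarrow> bool" where
  "single_lobe_at F z z' \<longleftrightarrow> (\<exists>M M'. lobes_within (Domain F) z = {M} \<and> lobes_within (Range F) z' = {M'})"

text \<open>The last clause keeps the unmatched lobes at matched vertices \<open>z\<close> and \<open>z'\<close> equinumerous,
  given that all vertices lie in equally many lobes.\<close>

definition admissible :: "('a \<times> 'a) set \<Rightarrow> bool" where
  "admissible F \<longleftrightarrow> F \<subseteq> V \<times> V \<and> single_valued F \<and> single_valued (F\<inverse>)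
    \<and> (\<forall>a a' b b'. (a, a') \<in> F \<longrightarrow> (b, b') \<in> F \<longrightarrow> (E a b \<longleftrightarrow> E a' b'))
    \<and> lobe_closed (Domain F) \<and> lobe_closed (Range F)
    \<and> (\<forall>z z'. (z, z') \<in> F \<longrightarrow> saturated_at F z z' \<or> single_lobe_at F z z')"

lemma admissibleD:
  assumes "admissible F"
  shows "F \<subseteq> V \<times> V" "(a, b) \<in> F \<Longrightarrow> (a, c) \<in> F \<Longrightarrow> b = c"
    "(a, c) \<in> F \<Longrightarrow> (b, c) \<in> F \<Longrightarrow> a = b"
    "(a, a') \<in> F \<Longrightarrow> (b, b') \<in> F \<Longrightarrow> E a b \<longleftrightarrow> E a' b'"
    "lobe_closed (Domain F)" "lobe_closed (Range F)"
    "(z, z') \<in> F \<Longrightarrow> saturated_at F z z' \<or> single_lobe_at F z z'"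
proof -
  have sv: "single_valued F" "single_valued (F\<inverse>)" using assms unfolding admissible_def by simp_all
  show "(a, b) \<in> F \<Longrightarrow> (a, c) \<in> F \<Longrightarrow> b = c" using single_valuedD[OF sv(1)] by blast
  show "(a, c) \<in> F \<Longrightarrow> (b, c) \<in> F \<Longrightarrow> a = b" using single_valuedD[OF sv(2)] by blast
  show "F \<subseteq> V \<times> V" "lobe_closed (Domain F)" "lobe_closed (Range F)"
    using assms unfolding admissible_def by simp_all
  show "(a, a') \<in> F \<Longrightarrow> (b, b') \<in> F \<Longrightarrow> E a b \<longleftrightarrow> E a' b'"
    "(z, z') \<in> F \<Longrightarrow> saturated_at F z z' \<or> single_lobe_at F z z'"
    using assms unfolding admissible_def by blast+
qed

lemma admissibleI:
  assumes "F \<subseteq> V \<times> V" "\<And>a b c. (a, b) \<in> F \<Longrightarrow> (a, c) \<in> F \<Longrightarrow> b = c"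
    "\<And>a b c. (a, c) \<in> F \<Longrightarrow> (b, c) \<in> F \<Longrightarrow> a = b"
    "\<And>a a' b b'. (a, a') \<in> F \<Longrightarrow> (b, b') \<in> F \<Longrightarrow> E a b \<longleftrightarrow> E a' b'"
    "lobe_closed (Domain F)" "lobe_closed (Range F)"
    "\<And>z z'. (z, z') \<in> F \<Longrightarrow> saturated_at F z z' \<or> single_lobe_at F z z'"
  shows "admissible F"
proof -
  have "single_valued F" "single_valued (F\<inverse>)"
    unfolding single_valued_def using assms(2,3) by blast+
  then show ?thesis unfolding admissible_def using assms(1,4-7) by blast
qed

lemma saturated_at_converse: "saturated_at (F\<inverse>) z' z \<longleftrightarrow> saturated_at F z z'"
  unfolding saturated_at_def by auto

lemma single_lobe_at_converse: "single_lobe_at (F\<inverse>) z' z \<longleftrightarrow> single_lobe_at F z z'"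
  unfolding single_lobe_at_def by auto

lemma admissible_converse:
  assumes F: "admissible F"
  shows "admissible (F\<inverse>)"
proof (rule admissibleI)
  show "F\<inverse> \<subseteq> V \<times> V" using admissibleD(1)[OF F] by blast
  show "b = c" if "(a, b) \<in> F\<inverse>" "(a, c) \<in> F\<inverse>" for a b c
    using that admissibleD(3)[OF F] by (metis converse_iff)
  show "a = b" if "(a, c) \<in> F\<inverse>" "(b, c) \<in> F\<inverse>" for a b c
    using that admissibleD(2)[OF F] by (metis converse_iff)
  show "E a b \<longleftrightarrow> E a' b'" if "(a, a') \<in> F\<inverse>" "(b, b') \<in> F\<inverse>" for a a' b b'
    using that admissibleD(4)[OF F] E_sym by (metis converse_iff)
  show "lobe_closed (Domain (F\<inverse>))" "lobe_closed (Range (F\<inverse>))"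
    using admissibleD(5,6)[OF F] by simp_all
  show "saturated_at (F\<inverse>) z z' \<or> single_lobe_at (F\<inverse>) z z'" if "(z, z') \<in> F\<inverse>" for z z'
    using that admissibleD(7)[OF F] saturated_at_converse single_lobe_at_converse by (metis converse_iff)
qed

lemma lobes_within_mono: "D1 \<subseteq> D2 \<Longrightarrow> lobes_within D1 z \<subseteq> lobes_within D2 z"
  unfolding lobes_within_def by blast

lemma lobes_within_subset: "lobes_within D z \<subseteq> lobes_at z"
  unfolding lobes_within_def by blast

lemma saturated_at_mono:
  assumes "saturated_at F z z'" "F \<subseteq> G"
  shows "saturated_at G z z'"
proof -
  have "lobes_within (Domain F) z \<subseteq> lobes_within (Domain G) z"
    "lobes_within (Range F) z' \<subseteq> lobes_within (Range G) z'"
    using lobes_within_mono[OF Domain_mono[OF assms(2)]] lobes_within_mono[OF Range_mono[OF assms(2)]]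
    by simp_all
  then show ?thesis using assms(1) lobes_within_subset unfolding saturated_at_def by blast
qed

definition lobe_iso :: "'a set set \<Rightarrow> 'a set set \<Rightarrow> ('a \<Rightarrow> 'a) \<Rightarrow> bool" where
  "lobe_iso L M h \<longleftrightarrow> bij_betw h (lobe_verts L) (lobe_verts M) \<and>
     (\<forall>a\<in>lobe_verts L. \<forall>b\<in>lobe_verts L. lobe_adj L a b \<longleftrightarrow> lobe_adj M (h a) (h b))"

lemma admissible_lobe_iso:
  assumes L: "L \<in> lobes V E" and M: "M \<in> lobes V E" and h: "lobe_iso L M h"
  shows "admissible {(a, h a) | a. a \<in> lobe_verts L}"
proof -
  let ?F = "{(a, h a) | a. a \<in> lobe_verts L}"
  have hb: "bij_betw h (lobe_verts L) (lobe_verts M)"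
    and hadj: "\<And>a b. a \<in> lobe_verts L \<Longrightarrow> b \<in> lobe_verts L \<Longrightarrow> lobe_adj L a b \<longleftrightarrow> lobe_adj M (h a) (h b)"
    using h unfolding lobe_iso_def by auto
  have hin: "a \<in> lobe_verts L \<Longrightarrow> h a \<in> lobe_verts M" for a using hb unfolding bij_betw_def by auto
  have dom: "Domain ?F = lobe_verts L" by auto
  have "Range ?F = h ` lobe_verts L" by blast
  then have ran: "Range ?F = lobe_verts M" using hb unfolding bij_betw_def by simp
  show ?thesis
  proof (rule admissibleI)
    show "?F \<subseteq> V \<times> V" using lobe_verts_subset[OF L] lobe_verts_subset[OF M] hin by blast
    show "b = c" if "(a, b) \<in> ?F" "(a, c) \<in> ?F" for a b c using that by blast
    show "a = b" if "(a, c) \<in> ?F" "(b, c) \<in> ?F" for a b c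
      using that hb unfolding bij_betw_def inj_on_def by blast
    show "E a b \<longleftrightarrow> E a' b'" if "(a, a') \<in> ?F" "(b, b') \<in> ?F" for a a' b b'
    proof -
      have ab: "a \<in> lobe_verts L" "b \<in> lobe_verts L" "a' = h a" "b' = h b" using that by blast+
      then show ?thesis
        using adj_iff_lobe_adj[OF L, of a b] adj_iff_lobe_adj[OF M, of "h a" "h b"] hadj hin by simp
    qed
    show "lobe_closed (Domain ?F)" using lobe_closed_lobe_verts[OF L] dom by simp
    show "lobe_closed (Range ?F)" using lobe_closed_lobe_verts[OF M] ran by simp
    show "saturated_at ?F z z' \<or> single_lobe_at ?F z z'" if zz: "(z, z') \<in> ?F" for z z'
    proof -
      obtain a where a: "a \<in> lobe_verts L" "z = a" "z' = h a" using zz by blast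
      have "lobes_within (Domain ?F) z = {L}" using lobes_within_lobe_verts[OF L a(1)] a dom by simp
      moreover have "lobes_within (Range ?F) z' = {M}"
        using lobes_within_lobe_verts[OF M hin[OF a(1)]] a ran by simp
      ultimately show ?thesis unfolding single_lobe_at_def by blast
    qed
  qed
qed

lemma lobes_within_Domain_Union_chain:
  assumes C: "chain\<^sub>\<subseteq> C" "\<forall>F\<in>C. lobe_closed (Domain F)"
    and Fi: "Fi \<in> C" "z \<in> Domain Fi"
    and single: "\<And>F. F \<in> C \<Longrightarrow> Fi \<subseteq> F \<Longrightarrow> \<exists>M. lobes_within (Domain F) z = {M}"
  shows "lobes_within (Domain (\<Union>C)) z = lobes_within (Domain Fi) z"
proof
  show "lobes_within (Domain Fi) z \<subseteq> lobes_within (Domain (\<Union>C)) z"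
    using lobes_within_mono[OF Domain_mono[OF Union_upper[OF Fi(1)]]] .
  show "lobes_within (Domain (\<Union>C)) z \<subseteq> lobes_within (Domain Fi) z"
  proof
    fix K assume "K \<in> lobes_within (Domain (\<Union>C)) z"
    then have K: "K \<in> lobes_at z" "lobe_verts K \<subseteq> Domain (\<Union>C)" unfolding lobes_within_def by auto
    obtain a where a: "a \<in> lobe_verts K" "a \<noteq> z"
      using lobe_verts_other[of K z] K(1) unfolding lobes_at_iff by blast
    then obtain Fj where Fj: "Fj \<in> C" "a \<in> Domain Fj" using K(2) by blast
    obtain F where F: "F \<in> C" "Fi \<subseteq> F" "Fj \<subseteq> F"
      using chain_subset_upper_bound[OF C(1) Fi(1) Fj(1)] by blast
    have zF: "z \<in> Domain F" and aF: "a \<in> Domain F" using F Fi Fj by blast+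
    have "lobe_verts K \<subseteq> Domain F"
    proof (rule ccontr)
      assume "\<not> lobe_verts K \<subseteq> Domain F"
      then have "lobe_verts K \<inter> Domain F = {z}"
        using lobe_closed_inter_lobe[OF _ zF K(1)] C(2) F(1) by blast
      then show False using a aF by blast
    qed
    then have "K \<in> lobes_within (Domain F) z" using K(1) unfolding lobes_within_def by blast
    moreover obtain N where "lobes_within (Domain F) z = {N}" using single[OF F(1,2)] by blast
    moreover obtain M where "lobes_within (Domain Fi) z = {M}" using single[OF Fi(1) order_refl] by blast
    moreover have "lobes_within (Domain Fi) z \<subseteq> lobes_within (Domain F) z"
      using lobes_within_mono[OF Domain_mono[OF F(2)]] .
    ultimately show "K \<in> lobes_within (Domain Fi) z" by auto
  qed
qed

lemma admissible_Union_chain_at: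
  assumes C: "chain\<^sub>\<subseteq> C" "\<forall>F\<in>C. admissible F" and zz: "(z, z') \<in> \<Union>C"
  shows "saturated_at (\<Union>C) z z' \<or> single_lobe_at (\<Union>C) z z'"
proof (cases "\<exists>F\<in>C. (z, z') \<in> F \<and> saturated_at F z z'")
  case True
  then obtain F where "F \<in> C" "saturated_at F z z'" by blast
  then show ?thesis using saturated_at_mono[of F z z' "\<Union>C"] by blast
next
  case False
  have single: "single_lobe_at F z z'" if F: "F \<in> C" "(z, z') \<in> F" for F
    using F False admissibleD(7)[of F z z'] C(2) by blast
  obtain Fi where Fi: "Fi \<in> C" "(z, z') \<in> Fi" using zz by blast
  have "lobes_within (Domain (\<Union>C)) z = lobes_within (Domain Fi) z"
  proof (rule lobes_within_Domain_Union_chain[OF C(1) _ Fi(1)])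
    show "\<forall>F\<in>C. lobe_closed (Domain F)" using C(2) admissibleD(5) by blast
    show "z \<in> Domain Fi" using Fi(2) by blast
    show "\<exists>M. lobes_within (Domain F) z = {M}" if F: "F \<in> C" "Fi \<subseteq> F" for F
    proof -
      have "(z, z') \<in> F" using F(2) Fi(2) by blast
      then show ?thesis using single[OF F(1)] unfolding single_lobe_at_def by blast
    qed
  qed
  moreover have "lobes_within (Range (\<Union>C)) z' = lobes_within (Range Fi) z'"
  proof -
    have "lobes_within (Domain (\<Union>(converse ` C))) z' = lobes_within (Domain (Fi\<inverse>)) z'"
    proof (rule lobes_within_Domain_Union_chain)
      show "chain\<^sub>\<subseteq> (converse ` C)" by (rule chain_subset_image[OF C(1)]) auto
      show "\<forall>F\<in>converse ` C. lobe_closed (Domain F)" using C(2) admissibleD(6) by auto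
      show "Fi\<inverse> \<in> converse ` C" "z' \<in> Domain (Fi\<inverse>)" using Fi by auto
      show "\<exists>M. lobes_within (Domain F) z' = {M}" if F: "F \<in> converse ` C" "Fi\<inverse> \<subseteq> F" for F
      proof -
        obtain G where G: "G \<in> C" "F = G\<inverse>" using F(1) by blast
        moreover have "(z, z') \<in> G" using F(2) G(2) Fi(2) by auto
        ultimately have "single_lobe_at G z z'" using single by blast
        then show ?thesis using G(2) unfolding single_lobe_at_def by auto
      qed
    qed
    moreover have "Domain (\<Union>(converse ` C)) = Range (\<Union>C)" by auto
    ultimately show ?thesis by simp
  qed
  ultimately show ?thesis using single[OF Fi] unfolding single_lobe_at_def by simp
qed

lemma admissible_Union_chain:
  assumes C: "chain\<^sub>\<subseteq> C" "\<forall>F\<in>C. admissible F"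
  shows "admissible (\<Union>C)"
proof (rule admissibleI)
  show "\<Union>C \<subseteq> V \<times> V"
  proof
    fix p assume "p \<in> \<Union>C"
    then obtain F where "F \<in> C" "p \<in> F" by blast
    then show "p \<in> V \<times> V" using admissibleD(1)[of F] C(2) by blast
  qed
  show "b = c" if p: "(a, b) \<in> \<Union>C" "(a, c) \<in> \<Union>C" for a b c
  proof -
    obtain F where "F \<in> C" "(a, b) \<in> F" "(a, c) \<in> F" using chain_subset_Union_two[OF C(1) p] by blast
    then show ?thesis using admissibleD(2)[of F a b c] C(2) by blast
  qed
  show "a = b" if p: "(a, c) \<in> \<Union>C" "(b, c) \<in> \<Union>C" for a b c
  proof -
    obtain F where "F \<in> C" "(a, c) \<in> F" "(b, c) \<in> F" using chain_subset_Union_two[OF C(1) p] by blast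
    then show ?thesis using admissibleD(3)[of F a c b] C(2) by blast
  qed
  show "E a b \<longleftrightarrow> E a' b'" if p: "(a, a') \<in> \<Union>C" "(b, b') \<in> \<Union>C" for a a' b b'
  proof -
    obtain F where "F \<in> C" "(a, a') \<in> F" "(b, b') \<in> F" using chain_subset_Union_two[OF C(1) p] by blast
    then show ?thesis using admissibleD(4)[of F a a' b b'] C(2) by blast
  qed
  have "chain\<^sub>\<subseteq> (Domain ` C)" using chain_subset_image[of C Domain, OF C(1) Domain_mono] .
  moreover have "\<forall>D\<in>Domain ` C. lobe_closed D" using C(2) admissibleD(5) by blast
  ultimately have "lobe_closed (\<Union>(Domain ` C))" using lobe_closed_Union_chain by blast
  then show "lobe_closed (Domain (\<Union>C))" by (simp add: Domain_Union)
  have "chain\<^sub>\<subseteq> (Range ` C)" using chain_subset_image[of C Range, OF C(1) Range_mono] .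
  moreover have "\<forall>D\<in>Range ` C. lobe_closed D" using C(2) admissibleD(6) by blast
  ultimately have "lobe_closed (\<Union>(Range ` C))" using lobe_closed_Union_chain by blast
  then show "lobe_closed (Range (\<Union>C))" by (simp add: Range_Union)
  show "saturated_at (\<Union>C) z z' \<or> single_lobe_at (\<Union>C) z z'" if "(z, z') \<in> \<Union>C" for z z'
    using admissible_Union_chain_at[OF C that] .
qed

lemma Domain_eq_V_if_saturated:
  assumes conn: "connected_graph V E" and F: "admissible F" "(u, u') \<in> F"
    and sat: "\<And>z z'. (z, z') \<in> F \<Longrightarrow> saturated_at F z z'"
  shows "Domain F = V"
proof
  show "Domain F \<subseteq> V" using admissibleD(1)[OF F(1)] by blast
  show "V \<subseteq> Domain F"
  proof
    fix w assume w: "w \<in> V"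
    have "u \<in> V" using admissibleD(1)[OF F(1)] F(2) by blast
    then have "(\<lambda>x y. x \<in> V \<and> y \<in> V \<and> E x y)\<^sup>*\<^sup>* u w"
      using conn w unfolding connected_graph_def by blast
    then show "w \<in> Domain F"
    proof (induction rule: rtranclp_induct)
      case base
      then show ?case using F(2) by blast
    next
      case (step x y)
      then have xy: "E x y" "x \<in> Domain F" by auto
      then obtain x' where "(x, x') \<in> F" by blast
      then have "lobes_within (Domain F) x = lobes_at x" using sat unfolding saturated_at_def by blast
      moreover have "lobe_of {x, y} \<in> lobes_at x"
        using lobe_of_in_lobes[of "{x, y}"] lobe_verts_lobe_of[OF xy(1)] xy(1)
        unfolding lobes_at_def doubleton_in_edges_iff by simp
      ultimately show ?case using lobe_verts_lobe_of[OF xy(1)] unfolding lobes_within_def by blast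
    qed
  qed
qed

lemma automorphism_of_admissible:
  assumes F: "admissible F" and dom: "Domain F = V" and ran: "Range F = V"
  shows "\<exists>f. is_automorphism V E f \<and> (\<forall>a b. (a, b) \<in> F \<longrightarrow> f a = b)"
proof -
  define f where "f a = (THE b. (a, b) \<in> F)" for a
  have f_eq: "f a = b" if ab: "(a, b) \<in> F" for a b
    unfolding f_def
  proof (rule the_equality)
    show "(a, b) \<in> F" by (rule ab)
    show "c = b" if "(a, c) \<in> F" for c using admissibleD(2)[OF F that ab] .
  qed
  have fa: "(a, f a) \<in> F" if a: "a \<in> V" for a
  proof -
    obtain b where "(a, b) \<in> F" using a dom by blast
    then show ?thesis using f_eq by simp
  qed
  have "bij_betw f V V"
  proof (rule bij_betw_imageI)
    show "inj_on f V"
    proof (rule inj_onI)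
      fix a b assume "a \<in> V" "b \<in> V" "f a = f b"
      then have "(a, f a) \<in> F" "(b, f a) \<in> F" using fa by metis+
      then show "a = b" by (rule admissibleD(3)[OF F])
    qed
    show "f ` V = V"
    proof
      show "f ` V \<subseteq> V" using fa ran by blast
      show "V \<subseteq> f ` V"
      proof
        fix b assume "b \<in> V"
        then obtain a where "(a, b) \<in> F" using ran by blast
        then show "b \<in> f ` V" using f_eq dom by blast
      qed
    qed
  qed
  moreover have "E x y \<longleftrightarrow> E (f x) (f y)" if "x \<in> V" "y \<in> V" for x y
    using admissibleD(4)[OF F fa fa] that .
  ultimately show ?thesis unfolding is_automorphism_def using f_eq by blast
qed

lemma automorphism_of_saturated:
  assumes conn: "connected_graph V E" and F: "admissible F" "(u, u') \<in> F"
    and sat: "\<And>z z'. (z, z') \<in> F \<Longrightarrow> saturated_at F z z'"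
  shows "\<exists>f. is_automorphism V E f \<and> (\<forall>a b. (a, b) \<in> F \<longrightarrow> f a = b)"
proof -
  have "Domain F = V" using Domain_eq_V_if_saturated[OF conn F sat] .
  moreover have "Domain (F\<inverse>) = V"
  proof (rule Domain_eq_V_if_saturated[OF conn admissible_converse[OF F(1)]])
    show "(u', u) \<in> F\<inverse>" using F(2) by simp
    show "saturated_at (F\<inverse>) z' z" if "(z', z) \<in> F\<inverse>" for z' z
      using sat[of z z'] that saturated_at_converse by simp
  qed
  ultimately show ?thesis using automorphism_of_admissible[OF F(1)] by simp
qed

lemma admissible_maximal_extension:
  assumes "admissible F0"
  shows "\<exists>F. admissible F \<and> F0 \<subseteq> F \<and> (\<forall>G. admissible G \<longrightarrow> F \<subseteq> G \<longrightarrow> G = F)"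
proof -
  define A where "A = {F. admissible F \<and> F0 \<subseteq> F}"
  have "\<exists>U\<in>A. \<forall>X\<in>C. X \<subseteq> U" if C: "C \<in> chains A" for C
  proof (cases "C = {}")
    case True
    then show ?thesis using assms unfolding A_def by blast
  next
    case False
    have "chain\<^sub>\<subseteq> C" "\<forall>F\<in>C. admissible F" using C unfolding chains_def A_def by auto
    then have "admissible (\<Union>C)" by (rule admissible_Union_chain)
    moreover have "F0 \<subseteq> \<Union>C" using C False unfolding chains_def A_def by blast
    ultimately show ?thesis unfolding A_def by blast
  qed
  then obtain F where "F \<in> A" "\<forall>X\<in>A. F \<subseteq> X \<longrightarrow> X = F" using Zorn_Lemma2[of A] by blast
  then show ?thesis unfolding A_def by blast
qed

definition outer_lobes :: "'a set \<Rightarrow> 'a \<Rightarrow> 'a set set set" where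
  "outer_lobes D z = lobes_at z - lobes_within D z"

lemma outer_lobes_iff:
  "M \<in> outer_lobes D z \<longleftrightarrow> M \<in> lobes V E \<and> z \<in> lobe_verts M \<and> \<not> lobe_verts M \<subseteq> D"
  unfolding outer_lobes_def lobes_within_def lobes_at_def by blast

end

text \<open>One step of the construction: at a matched pair \<open>(z, z')\<close> the unmatched lobes are paired
  by \<open>\<beta>\<close>, and each pair is matched by an isomorphism \<open>k M\<close> sending \<open>z\<close> to \<open>z'\<close>.\<close>

locale attach_step = sgraph +
  fixes F :: "('a \<times> 'a) set" and z z' :: 'a
    and \<beta> :: "'a set set \<Rightarrow> 'a set set" and k :: "'a set set \<Rightarrow> 'a \<Rightarrow> 'a"
  assumes admissible: "admissible F" and matched: "(z, z') \<in> F"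
    and \<beta>: "bij_betw \<beta> (outer_lobes (Domain F) z) (outer_lobes (Range F) z')"
    and k: "\<And>M. M \<in> outer_lobes (Domain F) z \<Longrightarrow> lobe_iso M (\<beta> M) (k M) \<and> k M z = z'"
begin

definition new_pairs :: "('a \<times> 'a) set" where
  "new_pairs = {(a, k M a) | M a. M \<in> outer_lobes (Domain F) z \<and> a \<in> lobe_verts M \<and> a \<noteq> z}"

lemma lobe_closed_matched: "lobe_closed (Domain F)" "lobe_closed (Range F)" "z \<in> Domain F" "z' \<in> Range F"
  using admissibleD(5,6)[OF admissible] matched by blast+

lemma \<beta>_outer: "M \<in> outer_lobes (Domain F) z \<Longrightarrow> \<beta> M \<in> outer_lobes (Range F) z'"
  using \<beta> unfolding bij_betw_def by blast

lemma outer_lobeD: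
  assumes "M \<in> outer_lobes (Domain F) z"
  shows "M \<in> lobes V E" "z \<in> lobe_verts M" "lobe_verts M \<inter> Domain F = {z}"
    "\<beta> M \<in> lobes V E" "z' \<in> lobe_verts (\<beta> M)" "lobe_verts (\<beta> M) \<inter> Range F = {z'}"
proof -
  show "\<beta> M \<in> lobes V E" "z' \<in> lobe_verts (\<beta> M)" "lobe_verts (\<beta> M) \<inter> Range F = {z'}"
    using \<beta>_outer[OF assms] lobe_closed_inter_lobe[OF lobe_closed_matched(2,4)]
    unfolding outer_lobes_iff lobes_at_iff by auto
  show "M \<in> lobes V E" "z \<in> lobe_verts M" "lobe_verts M \<inter> Domain F = {z}"
    using assms lobe_closed_inter_lobe[OF lobe_closed_matched(1,3)]
    unfolding outer_lobes_iff lobes_at_iff by auto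
qed

lemma k_bij: "M \<in> outer_lobes (Domain F) z \<Longrightarrow> bij_betw (k M) (lobe_verts M) (lobe_verts (\<beta> M))"
  using k unfolding lobe_iso_def by blast

lemma new_pairsE:
  assumes "(a, a') \<in> new_pairs"
  obtains M where "M \<in> outer_lobes (Domain F) z" "a \<in> lobe_verts M" "a \<noteq> z" "a' = k M a"
  using assms unfolding new_pairs_def by blast

lemma new_pair_outside:
  assumes M: "M \<in> outer_lobes (Domain F) z" and a: "a \<in> lobe_verts M" "a \<noteq> z"
  shows "a \<notin> Domain F" "k M a \<in> lobe_verts (\<beta> M)" "k M a \<noteq> z'" "k M a \<notin> Range F"
proof -
  show "a \<notin> Domain F" using outer_lobeD(3)[OF M] a by blast
  show ka: "k M a \<in> lobe_verts (\<beta> M)" using k_bij[OF M] a(1) unfolding bij_betw_def by blast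
  show "k M a \<noteq> z'"
  proof
    assume "k M a = z'"
    then have "k M a = k M z" using k[OF M] by simp
    then show False using k_bij[OF M] a outer_lobeD(2)[OF M] unfolding bij_betw_def inj_on_def by blast
  qed
  then show "k M a \<notin> Range F" using outer_lobeD(6)[OF M] ka by blast
qed

lemma outer_lobe_unique:
  assumes M: "M1 \<in> outer_lobes (Domain F) z" "M2 \<in> outer_lobes (Domain F) z"
  shows "a \<in> lobe_verts M1 \<Longrightarrow> a \<in> lobe_verts M2 \<Longrightarrow> a \<noteq> z \<Longrightarrow> M1 = M2"
    and "b \<in> lobe_verts (\<beta> M1) \<Longrightarrow> b \<in> lobe_verts (\<beta> M2) \<Longrightarrow> b \<noteq> z' \<Longrightarrow> M1 = M2"
proof -
  show "M1 = M2" if "a \<in> lobe_verts M1" "a \<in> lobe_verts M2" "a \<noteq> z"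
    using lobes_common_vertex_unique[OF outer_lobeD(1)[OF M(1)] outer_lobeD(1)[OF M(2)]]
      outer_lobeD(2)[OF M(1)] outer_lobeD(2)[OF M(2)] that by blast
  show "M1 = M2" if "b \<in> lobe_verts (\<beta> M1)" "b \<in> lobe_verts (\<beta> M2)" "b \<noteq> z'"
  proof -
    have "\<beta> M1 = \<beta> M2"
      using lobes_common_vertex_unique[OF outer_lobeD(4)[OF M(1)] outer_lobeD(4)[OF M(2)]]
        outer_lobeD(5)[OF M(1)] outer_lobeD(5)[OF M(2)] that by blast
    then show ?thesis using \<beta> M unfolding bij_betw_def inj_on_def by blast
  qed
qed

lemma Domain_extended: "Domain (F \<union> new_pairs) = attach_lobes (Domain F) z"
proof
  show "Domain (F \<union> new_pairs) \<subseteq> attach_lobes (Domain F) z"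
  proof
    fix x assume "x \<in> Domain (F \<union> new_pairs)"
    then consider "x \<in> Domain F" | x' where "(x, x') \<in> new_pairs" by blast
    then show "x \<in> attach_lobes (Domain F) z"
    proof cases
      case 2
      then obtain M where "M \<in> outer_lobes (Domain F) z" "x \<in> lobe_verts M" by (rule new_pairsE)
      then show ?thesis unfolding attach_lobes_def outer_lobes_def by blast
    qed (simp add: attach_lobes_def)
  qed
  show "attach_lobes (Domain F) z \<subseteq> Domain (F \<union> new_pairs)"
  proof
    fix x assume "x \<in> attach_lobes (Domain F) z"
    then consider "x \<in> Domain F" | M where "M \<in> lobes_at z" "x \<in> lobe_verts M"
      unfolding attach_lobes_def by blast
    then show "x \<in> Domain (F \<union> new_pairs)"
    proof cases
      case (2 M)
      show ?thesis
      proof (cases "x = z \<or> lobe_verts M \<subseteq> Domain F")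
        case True
        then show ?thesis using lobe_closed_matched(3) 2 by blast
      next
        case False
        then have "(x, k M x) \<in> new_pairs"
          using 2 unfolding new_pairs_def outer_lobes_iff lobes_at_iff by blast
        then show ?thesis by blast
      qed
    qed blast
  qed
qed

lemma Range_extended: "Range (F \<union> new_pairs) = attach_lobes (Range F) z'"
proof
  show "Range (F \<union> new_pairs) \<subseteq> attach_lobes (Range F) z'"
  proof
    fix x assume "x \<in> Range (F \<union> new_pairs)"
    then consider "x \<in> Range F" | a where "(a, x) \<in> new_pairs" by blast
    then show "x \<in> attach_lobes (Range F) z'"
    proof cases
      case (2 a)
      then obtain M where M: "M \<in> outer_lobes (Domain F) z" "a \<in> lobe_verts M" "a \<noteq> z" "x = k M a"
        by (rule new_pairsE)
      then have "x \<in> lobe_verts (\<beta> M)" "\<beta> M \<in> lobes_at z'"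
        using new_pair_outside(2)[OF M(1-3)] outer_lobeD(4,5)[OF M(1)] lobes_at_iff by auto
      then show ?thesis unfolding attach_lobes_def by blast
    qed (simp add: attach_lobes_def)
  qed
  show "attach_lobes (Range F) z' \<subseteq> Range (F \<union> new_pairs)"
  proof
    fix x assume "x \<in> attach_lobes (Range F) z'"
    then consider "x \<in> Range F" | M' where "M' \<in> lobes_at z'" "x \<in> lobe_verts M'"
      unfolding attach_lobes_def by blast
    then show "x \<in> Range (F \<union> new_pairs)"
    proof cases
      case (2 M')
      show ?thesis
      proof (cases "x = z' \<or> lobe_verts M' \<subseteq> Range F")
        case True
        then show ?thesis using lobe_closed_matched(4) 2 by blast
      next
        case False
        then have "M' \<in> outer_lobes (Range F) z'" using 2 unfolding outer_lobes_iff lobes_at_iff by blast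
        then obtain M where M: "M \<in> outer_lobes (Domain F) z" "M' = \<beta> M"
          using \<beta> unfolding bij_betw_def by blast
        then obtain a where a: "a \<in> lobe_verts M" "x = k M a"
          using k_bij[OF M(1)] 2 unfolding bij_betw_def by blast
        then have "a \<noteq> z" using k[OF M(1)] False by blast
        then have "(a, x) \<in> new_pairs" using M(1) a unfolding new_pairs_def by blast
        then show ?thesis by blast
      qed
    qed blast
  qed
qed

lemma single_valued_extended: "(a, b) \<in> F \<union> new_pairs \<Longrightarrow> (a, c) \<in> F \<union> new_pairs \<Longrightarrow> b = c"
proof -
  have old_new: "a \<notin> Domain F" if "(a, b) \<in> new_pairs" for a b
    using that new_pair_outside(1) by (blast elim: new_pairsE)
  assume ab: "(a, b) \<in> F \<union> new_pairs" and ac: "(a, c) \<in> F \<union> new_pairs"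
  show "b = c"
  proof (cases "a \<in> Domain F")
    case True
    then have "(a, b) \<in> F" "(a, c) \<in> F" using ab ac old_new by blast+
    then show ?thesis using admissibleD(2)[OF admissible] by blast
  next
    case False
    then have "(a, b) \<in> new_pairs" "(a, c) \<in> new_pairs" using ab ac by blast+
    then obtain M1 M2 where M1: "M1 \<in> outer_lobes (Domain F) z" "a \<in> lobe_verts M1" "a \<noteq> z" "b = k M1 a"
      and M2: "M2 \<in> outer_lobes (Domain F) z" "a \<in> lobe_verts M2" "c = k M2 a"
      by (blast elim: new_pairsE)
    then show ?thesis using outer_lobe_unique(1)[OF M1(1) M2(1)] by blast
  qed
qed

lemma injective_extended: "(a, c) \<in> F \<union> new_pairs \<Longrightarrow> (b, c) \<in> F \<union> new_pairs \<Longrightarrow> a = b"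
proof -
  have old_new: "c \<notin> Range F" if "(a, c) \<in> new_pairs" for a c
    using that new_pair_outside(4) by (blast elim: new_pairsE)
  assume ac: "(a, c) \<in> F \<union> new_pairs" and bc: "(b, c) \<in> F \<union> new_pairs"
  show "a = b"
  proof (cases "c \<in> Range F")
    case True
    then have "(a, c) \<in> F" "(b, c) \<in> F" using ac bc old_new by blast+
    then show ?thesis using admissibleD(3)[OF admissible] by blast
  next
    case False
    then have "(a, c) \<in> new_pairs" "(b, c) \<in> new_pairs" using ac bc by blast+
    then obtain M1 M2 where M1: "M1 \<in> outer_lobes (Domain F) z" "a \<in> lobe_verts M1" "a \<noteq> z" "c = k M1 a"
      and M2: "M2 \<in> outer_lobes (Domain F) z" "b \<in> lobe_verts M2" "b \<noteq> z" "c = k M2 b"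
      by (blast elim: new_pairsE)
    have "M1 = M2"
      using outer_lobe_unique(2)[OF M1(1) M2(1)] new_pair_outside(2,3)[OF M1(1-3)]
        new_pair_outside(2)[OF M2(1-3)] M1(4) M2(4) by simp
    then show ?thesis using k_bij[OF M1(1)] M1 M2 unfolding bij_betw_def inj_on_def by blast
  qed
qed

lemma k_adj:
  assumes M: "M \<in> outer_lobes (Domain F) z" and ab: "a \<in> lobe_verts M" "b \<in> lobe_verts M"
  shows "E a b \<longleftrightarrow> E (k M a) (k M b)"
proof -
  have "k M a \<in> lobe_verts (\<beta> M)" "k M b \<in> lobe_verts (\<beta> M)"
    using k_bij[OF M] ab unfolding bij_betw_def by blast+
  then show ?thesis
    using adj_iff_lobe_adj[OF outer_lobeD(1)[OF M] ab] adj_iff_lobe_adj[OF outer_lobeD(4)[OF M]]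
      k[OF M] ab unfolding lobe_iso_def by simp
qed

lemma adj_old_new:
  assumes aa: "(a, a') \<in> F" and bb: "(b, b') \<in> new_pairs"
  shows "E a b \<longleftrightarrow> E a' b'"
proof -
  obtain M where M: "M \<in> outer_lobes (Domain F) z" "b \<in> lobe_verts M" "b \<noteq> z" "b' = k M b"
    using bb by (rule new_pairsE)
  have b': "b' \<in> lobe_verts (\<beta> M)" "b' \<noteq> z'" using new_pair_outside(2,3)[OF M(1-3)] M(4) by auto
  have outer: "M \<in> lobes_at z" "\<not> lobe_verts M \<subseteq> Domain F"
    "\<beta> M \<in> lobes_at z'" "\<not> lobe_verts (\<beta> M) \<subseteq> Range F"
    using M(1) \<beta>_outer[OF M(1)] unfolding outer_lobes_def lobes_within_def by auto
  have aD: "a \<in> Domain F" "a' \<in> Range F" using aa by blast+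
  have "a = z" if "E a b"
    using edge_into_attached_lobe[OF lobe_closed_matched(1,3) outer(1,2) aD(1) M(2,3) that] .
  moreover have "a' = z'" if "E a' b'"
    using edge_into_attached_lobe[OF lobe_closed_matched(2,4) outer(3,4) aD(2) b' that] .
  moreover have "a = z \<longleftrightarrow> a' = z'"
    using admissibleD(2)[OF admissible, of z a' z'] admissibleD(3)[OF admissible, of a z' z] aa matched
    by auto
  moreover have "E z b \<longleftrightarrow> E z' b'"
    using k_adj[OF M(1) outer_lobeD(2)[OF M(1)] M(2)] k[OF M(1)] M(4) by simp
  ultimately show ?thesis by blast
qed

lemma adj_new_new:
  assumes aa: "(a, a') \<in> new_pairs" and bb: "(b, b') \<in> new_pairs"
  shows "E a b \<longleftrightarrow> E a' b'"
proof -
  obtain M1 where M1: "M1 \<in> outer_lobes (Domain F) z" "a \<in> lobe_verts M1" "a \<noteq> z" "a' = k M1 a"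
    using aa by (rule new_pairsE)
  obtain M2 where M2: "M2 \<in> outer_lobes (Domain F) z" "b \<in> lobe_verts M2" "b \<noteq> z" "b' = k M2 b"
    using bb by (rule new_pairsE)
  show ?thesis
  proof (cases "M1 = M2")
    case True
    then show ?thesis using k_adj[OF M1(1,2)] M1(4) M2(2,4) by simp
  next
    case False
    have "\<not> E a b"
      using no_edge_between_attached_lobes[OF lobe_closed_matched(1,3) _ _ _ False M1(2,3) M2(2,3)] M1(1) M2(1)
      unfolding outer_lobes_iff lobes_at_iff by blast
    moreover have "\<not> E a' b'"
    proof (rule no_edge_between_attached_lobes[OF lobe_closed_matched(2,4)])
      show "\<beta> M1 \<in> lobes_at z'" "\<not> lobe_verts (\<beta> M1) \<subseteq> Range F" "\<beta> M2 \<in> lobes_at z'"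
        using \<beta>_outer[OF M1(1)] \<beta>_outer[OF M2(1)] unfolding outer_lobes_def lobes_within_def by auto
      show "\<beta> M1 \<noteq> \<beta> M2" using False \<beta> M1(1) M2(1) unfolding bij_betw_def inj_on_def by blast
      show "a' \<in> lobe_verts (\<beta> M1)" "a' \<noteq> z'" using new_pair_outside(2,3)[OF M1(1-3)] M1(4) by simp_all
      show "b' \<in> lobe_verts (\<beta> M2)" "b' \<noteq> z'" using new_pair_outside(2,3)[OF M2(1-3)] M2(4) by simp_all
    qed
    ultimately show ?thesis by blast
  qed
qed

lemma adj_extended:
  assumes aa: "(a, a') \<in> F \<union> new_pairs" and bb: "(b, b') \<in> F \<union> new_pairs"
  shows "E a b \<longleftrightarrow> E a' b'"
proof -
  consider "(a, a') \<in> F" "(b, b') \<in> F" | "(a, a') \<in> F" "(b, b') \<in> new_pairs"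
    | "(a, a') \<in> new_pairs" "(b, b') \<in> F" | "(a, a') \<in> new_pairs" "(b, b') \<in> new_pairs"
    using aa bb by blast
  then show ?thesis
  proof cases
    case 1 then show ?thesis using admissibleD(4)[OF admissible] by blast
  next
    case 2 then show ?thesis by (rule adj_old_new)
  next
    case 3 then have "E b a \<longleftrightarrow> E b' a'" by (intro adj_old_new)
    then show ?thesis using E_sym by blast
  next
    case 4 then show ?thesis by (rule adj_new_new)
  qed
qed

lemma balanced_extended:
  assumes ww: "(w, w') \<in> F \<union> new_pairs"
  shows "saturated_at (F \<union> new_pairs) w w' \<or> single_lobe_at (F \<union> new_pairs) w w'"
proof (cases "(w, w') \<in> F")
  case old: True
  show ?thesis
  proof (cases "w = z")
    case True
    then have "w' = z'" using admissibleD(2)[OF admissible] old matched by blast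
    then have "saturated_at (F \<union> new_pairs) w w'"
      using True lobes_within_attach_lobes_centre
      unfolding saturated_at_def Domain_extended Range_extended by simp
    then show ?thesis ..
  next
    case False
    then have "w' \<noteq> z'" using admissibleD(3)[OF admissible] old matched by blast
    then have "lobes_within (Domain (F \<union> new_pairs)) w = lobes_within (Domain F) w"
      "lobes_within (Range (F \<union> new_pairs)) w' = lobes_within (Range F) w'"
      using lobes_within_attach_lobes_old[OF lobe_closed_matched(1,3) _ False]
        lobes_within_attach_lobes_old[OF lobe_closed_matched(2,4)] old
      unfolding Domain_extended Range_extended by blast+
    then show ?thesis
      using admissibleD(7)[OF admissible old] unfolding saturated_at_def single_lobe_at_def by simp
  qed
next
  case False
  then have "(w, w') \<in> new_pairs" using ww by blast
  then obtain M where M: "M \<in> outer_lobes (Domain F) z" "w \<in> lobe_verts M" "w \<noteq> z" "w' = k M w"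
    by (rule new_pairsE)
  have "lobes_within (Domain (F \<union> new_pairs)) w = {M}"
    using lobes_within_attach_lobes_new[OF lobe_closed_matched(1,3) _ M(2) new_pair_outside(1)[OF M(1-3)]] M(1)
    unfolding Domain_extended outer_lobes_def by blast
  moreover have "lobes_within (Range (F \<union> new_pairs)) w' = {\<beta> M}"
    using lobes_within_attach_lobes_new[OF lobe_closed_matched(2,4) _ new_pair_outside(2)[OF M(1-3)]
      new_pair_outside(4)[OF M(1-3)]] \<beta>_outer[OF M(1)] M(4)
    unfolding Range_extended outer_lobes_def by blast
  ultimately show ?thesis unfolding single_lobe_at_def by blast
qed

lemma admissible_extended: "admissible (F \<union> new_pairs)"
proof (rule admissibleI)
  have "new_pairs \<subseteq> V \<times> V"
  proof
    fix p assume "p \<in> new_pairs"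
    then obtain M a where M: "M \<in> outer_lobes (Domain F) z" "a \<in> lobe_verts M" "a \<noteq> z" "p = (a, k M a)"
      unfolding new_pairs_def by blast
    then show "p \<in> V \<times> V"
      using new_pair_outside(2)[OF M(1-3)] lobe_verts_subset outer_lobeD(1,4)[OF M(1)] by blast
  qed
  then show "F \<union> new_pairs \<subseteq> V \<times> V" using admissibleD(1)[OF admissible] by blast
  show "lobe_closed (Domain (F \<union> new_pairs))"
    using lobe_closed_attach_lobes[OF lobe_closed_matched(1,3)] Domain_extended by simp
  show "lobe_closed (Range (F \<union> new_pairs))"
    using lobe_closed_attach_lobes[OF lobe_closed_matched(2,4)] Range_extended by simp
qed (use single_valued_extended injective_extended adj_extended balanced_extended in blast)+

lemma new_pairs_not_subset:
  assumes "outer_lobes (Domain F) z \<noteq> {}"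
  shows "\<not> new_pairs \<subseteq> F"
proof -
  obtain M where M: "M \<in> outer_lobes (Domain F) z" using assms by blast
  obtain w where w: "w \<in> lobe_verts M" "w \<noteq> z" using lobe_verts_other outer_lobeD(1,2)[OF M] by blast
  then have "(w, k M w) \<in> new_pairs" using M unfolding new_pairs_def by blast
  moreover have "(w, k M w) \<notin> F" using new_pair_outside(1)[OF M w] by blast
  ultimately show ?thesis by blast
qed

end

section \<open>The converse: building automorphisms\<close>

locale lobe_homogeneous = sgraph +
  assumes lobes_arc_transitive: "\<forall>L\<in>lobes V E. arc_transitive (lobe_verts L) (lobe_adj L)"
    and lobes_isomorphic: "\<forall>L1\<in>lobes V E. \<forall>L2\<in>lobes V E.
      graph_iso (lobe_verts L1) (lobe_adj L1) (lobe_verts L2) (lobe_adj L2)"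
    and lobes_at_eqpoll: "\<forall>u\<in>V. \<forall>v\<in>V. lobes_at u \<approx> lobes_at v"
begin

lemma lobe_iso_arc:
  assumes L1: "L1 \<in> lobes V E" and L2: "L2 \<in> lobes V E" and uv: "{u, v} \<in> L1" and xy: "{x, y} \<in> L2"
  shows "\<exists>h. lobe_iso L1 L2 h \<and> h u = x \<and> h v = y"
proof -
  obtain g where g: "bij_betw g (lobe_verts L1) (lobe_verts L2)"
    "\<forall>a\<in>lobe_verts L1. \<forall>b\<in>lobe_verts L1. lobe_adj L1 a b \<longleftrightarrow> lobe_adj L2 (g a) (g b)"
    using lobes_isomorphic L1 L2 unfolding graph_iso_def by blast
  have uvL: "u \<in> lobe_verts L1" "v \<in> lobe_verts L1" and xyL: "x \<in> lobe_verts L2" "y \<in> lobe_verts L2"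
    using uv xy unfolding lobe_verts_def by blast+
  have "lobe_adj L2 (g u) (g v)" using uv lobe_adj_iff[OF L1] g(2) uvL by blast
  moreover have "g u \<in> lobe_verts L2" "g v \<in> lobe_verts L2" using g(1) uvL by (auto simp: bij_betw_def)
  moreover have "lobe_adj L2 x y" using xy lobe_adj_iff[OF L2] by blast
  ultimately obtain s where s: "is_automorphism (lobe_verts L2) (lobe_adj L2) s" "s (g u) = x" "s (g v) = y"
    using lobes_arc_transitive L2 xyL unfolding arc_transitive_def by blast
  have sb: "bij_betw s (lobe_verts L2) (lobe_verts L2)"
    and sa: "\<forall>a\<in>lobe_verts L2. \<forall>b\<in>lobe_verts L2. lobe_adj L2 a b \<longleftrightarrow> lobe_adj L2 (s a) (s b)"
    using s(1) unfolding is_automorphism_def by auto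
  have "lobe_iso L1 L2 (s \<circ> g)"
    unfolding lobe_iso_def
  proof
    show "bij_betw (s \<circ> g) (lobe_verts L1) (lobe_verts L2)" using bij_betw_trans[OF g(1) sb] .
    show "\<forall>a\<in>lobe_verts L1. \<forall>b\<in>lobe_verts L1. lobe_adj L1 a b \<longleftrightarrow> lobe_adj L2 ((s \<circ> g) a) ((s \<circ> g) b)"
    proof (intro ballI)
      fix a b assume "a \<in> lobe_verts L1" "b \<in> lobe_verts L1"
      moreover have "g a \<in> lobe_verts L2" "g b \<in> lobe_verts L2"
        using g(1) calculation unfolding bij_betw_def by blast+
      ultimately show "lobe_adj L1 a b \<longleftrightarrow> lobe_adj L2 ((s \<circ> g) a) ((s \<circ> g) b)"
        using g(2) sa by simp
    qed
  qed
  then show ?thesis using s by auto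
qed

lemma lobe_iso_at:
  assumes M: "M \<in> lobes V E" "z \<in> lobe_verts M" and M': "M' \<in> lobes V E" "z' \<in> lobe_verts M'"
  shows "\<exists>h. lobe_iso M M' h \<and> h z = z'"
proof -
  obtain w where "{z, w} \<in> M" using lobe_verts_other[OF M] by blast
  moreover obtain w' where "{z', w'} \<in> M'" using lobe_verts_other[OF M'] by blast
  ultimately obtain h where "lobe_iso M M' h" "h z = z'" using lobe_iso_arc[OF M(1) M'(1)] by blast
  then show ?thesis by blast
qed

lemma outer_lobes_eqpoll:
  assumes F: "admissible F" "(z, z') \<in> F" and single: "single_lobe_at F z z'"
  shows "outer_lobes (Domain F) z \<approx> outer_lobes (Range F) z'"
proof -
  obtain M M' where M: "lobes_within (Domain F) z = {M}" "lobes_within (Range F) z' = {M'}"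
    using single unfolding single_lobe_at_def by blast
  have "M \<in> lobes_at z" "M' \<in> lobes_at z'"
    using M lobes_within_subset[of "Domain F" z] lobes_within_subset[of "Range F" z'] by auto
  then have "insert M (outer_lobes (Domain F) z) = lobes_at z"
    "insert M' (outer_lobes (Range F) z') = lobes_at z'"
    unfolding outer_lobes_def M by (simp_all add: insert_absorb)
  moreover have "z \<in> V" "z' \<in> V" using admissibleD(1)[OF F(1)] F(2) by auto
  ultimately have "insert M (outer_lobes (Domain F) z) \<approx> insert M' (outer_lobes (Range F) z')"
    using lobes_at_eqpoll by simp
  moreover have "M \<notin> outer_lobes (Domain F) z" "M' \<notin> outer_lobes (Range F) z'"
    unfolding outer_lobes_def M by simp_all
  ultimately show ?thesis by (rule insert_eqpoll_insertD)
qed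

lemma admissible_extend:
  assumes F: "admissible F" "(z, z') \<in> F" and unsat: "\<not> saturated_at F z z'"
  shows "\<exists>F'. admissible F' \<and> F \<subset> F'"
proof -
  have single: "single_lobe_at F z z'" using admissibleD(7)[OF F] unsat by blast
  obtain \<beta> where \<beta>: "bij_betw \<beta> (outer_lobes (Domain F) z) (outer_lobes (Range F) z')"
    using outer_lobes_eqpoll[OF F single] unfolding eqpoll_def by blast
  define k where "k M = (SOME h. lobe_iso M (\<beta> M) h \<and> h z = z')" for M
  have k: "lobe_iso M (\<beta> M) (k M) \<and> k M z = z'" if M: "M \<in> outer_lobes (Domain F) z" for M
  proof -
    have "\<beta> M \<in> outer_lobes (Range F) z'" using bij_betw_apply[OF \<beta> M] .
    then have "\<beta> M \<in> lobes V E" "z' \<in> lobe_verts (\<beta> M)" unfolding outer_lobes_iff by blast+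
    moreover have "M \<in> lobes V E" "z \<in> lobe_verts M" using M unfolding outer_lobes_iff by blast+
    ultimately have "\<exists>h. lobe_iso M (\<beta> M) h \<and> h z = z'" by (intro lobe_iso_at)
    then show ?thesis unfolding k_def by (rule someI_ex)
  qed
  have "attach_step V E F z z' \<beta> k"
    using sgraph_axioms F \<beta> k by (simp add: attach_step_def attach_step_axioms_def)
  then interpret step: attach_step V E F z z' \<beta> k .
  have "outer_lobes (Domain F) z \<noteq> {}"
  proof
    assume none: "outer_lobes (Domain F) z = {}"
    then have "outer_lobes (Range F) z' = {}" using \<beta> unfolding bij_betw_def by blast
    then have "saturated_at F z z'"
      using none unfolding saturated_at_def outer_lobes_def
      by (metis Diff_eq_empty_iff lobes_within_subset subset_antisym)
    then show False using unsat by blast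
  qed
  then have "F \<subset> F \<union> step.new_pairs" using step.new_pairs_not_subset by blast
  then show ?thesis using step.admissible_extended by blast
qed

lemma maximal_admissible_saturated:
  assumes F: "admissible F" "(z, z') \<in> F" and max: "\<forall>G. admissible G \<longrightarrow> F \<subseteq> G \<longrightarrow> G = F"
  shows "saturated_at F z z'"
  using admissible_extend[OF F] max by blast

lemma exists_automorphism:
  assumes conn: "connected_graph V E" and uv: "E u0 v0" and xy: "E x0 y0"
  shows "\<exists>f. is_automorphism V E f \<and> f u0 = x0 \<and> f v0 = y0"
proof -
  let ?L1 = "lobe_of {u0, v0}" and ?L2 = "lobe_of {x0, y0}"
  have L: "?L1 \<in> lobes V E" "{u0, v0} \<in> ?L1" "?L2 \<in> lobes V E" "{x0, y0} \<in> ?L2"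
    using lobe_of_in_lobes lobe_of_self doubleton_in_edges_iff uv xy by blast+
  obtain h where h: "lobe_iso ?L1 ?L2 h" "h u0 = x0" "h v0 = y0"
    using lobe_iso_arc[OF L(1) L(3) L(2) L(4)] by blast
  let ?F0 = "{(a, h a) | a. a \<in> lobe_verts ?L1}"
  have pairs: "(u0, x0) \<in> ?F0" "(v0, y0) \<in> ?F0" using lobe_verts_lobe_of[OF uv] h(2,3) by auto
  obtain F where F: "admissible F" "?F0 \<subseteq> F" and max: "\<forall>G. admissible G \<longrightarrow> F \<subseteq> G \<longrightarrow> G = F"
    using admissible_maximal_extension[OF admissible_lobe_iso[OF L(1) L(3) h(1)]] by blast
  have "saturated_at F z z'" if "(z, z') \<in> F" for z z'
    using maximal_admissible_saturated[OF F(1) that max] .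
  then obtain f where "is_automorphism V E f" "\<forall>a b. (a, b) \<in> F \<longrightarrow> f a = b"
    using automorphism_of_saturated[OF conn F(1)] pairs F(2) by blast
  then show ?thesis using pairs F(2) by blast
qed

theorem arc_transitive_if_lobe_homogeneous:
  assumes "connected_graph V E"
  shows "arc_transitive V E"
  unfolding arc_transitive_def using exists_automorphism[OF assms] by blast

end

context sgraph
begin

lemma connectivity_one_neighbour:
  assumes c: "connectivity_one V E" and w: "w \<in> V"
  shows "\<exists>w'. E w w'"
proof -
  obtain x where x: "x \<in> V" "x \<noteq> w" using c w unfolding connectivity_one_def by metis
  have "(\<lambda>x y. x \<in> V \<and> y \<in> V \<and> E x y)\<^sup>*\<^sup>* w x"
    using c w x unfolding connectivity_one_def connected_graph_def by blast
  then show ?thesis using x(2) by (metis (no_types, lifting) converse_rtranclpE)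
qed

theorem arc_transitive_iff_lobe_homogeneous:
  assumes c: "connectivity_one V E"
  shows "arc_transitive V E \<longleftrightarrow> lobe_homogeneous V E"
proof
  assume at: "arc_transitive V E"
  have "\<forall>w\<in>V. \<exists>w'. E w w'" using connectivity_one_neighbour[OF c] by blast
  then show "lobe_homogeneous V E"
    using arc_transitive_lobe[OF at] arc_transitive_lobes_iso[OF at] arc_transitive_lobes_at_eqpoll[OF at]
    by unfold_locales blast+
next
  assume "lobe_homogeneous V E"
  moreover have "connected_graph V E" using c unfolding connectivity_one_def by blast
  ultimately show "arc_transitive V E" by (rule lobe_homogeneous.arc_transitive_if_lobe_homogeneous)
qed

end

theorem theorem5p1:
  fixes V :: "'a set" and E :: "'a \<Rightarrow> 'a \<Rightarrow> bool"
  assumes "simple_graph V E" and "countable V" and "connectivity_one V E"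
  shows "arc_transitive V E \<longleftrightarrow>
     ((\<forall>L\<in>lobes V E. arc_transitive (lobe_verts L) (lobe_adj L)) \<and>
      (\<forall>L1\<in>lobes V E. \<forall>L2\<in>lobes V E.
          graph_iso (lobe_verts L1) (lobe_adj L1) (lobe_verts L2) (lobe_adj L2)) \<and>
      (\<forall>u\<in>V. \<forall>v\<in>V. {L \<in> lobes V E. u \<in> lobe_verts L} \<approx> {L \<in> lobes V E. v \<in> lobe_verts L}))"
proof -
  interpret sgraph V E using assms(1) by (rule sgraph.intro)
  show ?thesis
    using arc_transitive_iff_lobe_homogeneous[OF assms(3)] sgraph_axioms
    unfolding lobe_homogeneous_def lobe_homogeneous_axioms_def lobes_at_def by simp
qed

end
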